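(* Let $A$ be a twisted differential operator of order $2$ with source $\tilde A$, let $b\in\mathcal B$, and let $B=b_{20}D^2+b_{11}MD+b_{02}M^2+b_{10}D+b_{01}M+b_{00}I$ be the operator with Weyl symbol $b$, with transpose $B'$. Then: $\ker\tilde A=0$ iff $\ker B=0$; $\tilde A$ is globally regular iff $B$ is globally regular; $(\tilde A)'$ is globally regular iff $B'$ is globally regular.
   Context: $D=-\mathrm i\,d/dx$, $M$ = multiplication by $x$ on $\mathcal S'(\mathbb R)$; $D_x,D_y=-\mathrm i\partial_x,-\mathrm i\partial_y$, $M_x,M_y$ multiplication by $x,y$ on $\mathbb R^2$. Globally regular: $u\in\mathcal S'$, $Pu\in\mathcal S$ imply $u\in\mathcal S$. Kernels are in $\mathcal S'(\mathbb R)$. A twisted differential operator of order $2$ is $A=\sum_{j+k\le 2}(-1)^{j+k}a_{kj}(\alpha D_y-\beta M_x)^j(\gamma D_x-\delta M_y)^k$ with $\alpha,\beta,\gamma,\delta\in\mathbb R$, $\alpha\delta-\beta\gamma=1$, $\beta\delta\ne0$, $a_{kj}\in\mathbb C$, $|a_{20}|+|a_{11}|+|a_{02}|\ne0$; its source is $\tilde A=\sum_{j+k\le2}a_{kj}M^jD^k$, and the transpose of $\sum c_{kj}M^jD^k$ is $\sum(-1)^kc_{kj}D^kM^j$. The Weyl symbol of $P=p_{20}D^2+p_{11}MD+p_{02}M^2+p_{10}D+p_{01}M+p_{00}I$ is $p_{20}\xi^2+p_{11}x\xi+p_{02}x^2+p_{10}\xi+p_{01}x+p_{00}+\frac{\mathrm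 i}2p_{11}$. Polynomials $p,q$ are symplectically equivalent if $q=p\circ\chi$ for a linear map $\chi$ of $\mathbb R^2$ of determinant $1$. $\mathcal B$ is the set of polynomials $b(x,\xi)=b_{20}\xi^2+b_{11}x\xi+b_{02}x^2+b_{10}\xi+b_{01}x+b_{00}+\frac{\mathrm i}2b_{11}$ with $b_{20}\ne0$ symplectically equivalent to the Weyl symbol of $\tilde A$. *)

theory Defs
  imports "HOL-Analysis.Analysis"
begin

fun dn :: "nat \<Rightarrow> (real \<Rightarrow> complex) \<Rightarrow> real \<Rightarrow> complex" where
  "dn 0 f = f"
| "dn (Suc k) f = (\<lambda>x. vector_derivative (dn k f) (at x))"

definition schwartz :: "(real \<Rightarrow> complex) set" where
  "schwartz = {f. (\<forall>k x. (dn k f has_vector_derivative dn (Suc k) f x) (at x)) \<and>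
                  (\<forall>j k. \<exists>C. \<forall>x. norm (complex_of_real x ^ j * dn k f x) \<le> C)}"

(* tempered distributions: continuous linear functionals on S(R);
   only their values on S(R) are meaningful *)
definition tempered :: "((real \<Rightarrow> complex) \<Rightarrow> complex) \<Rightarrow> bool" where
  "tempered u \<longleftrightarrow>
     (\<forall>\<phi>\<in>schwartz. \<forall>\<psi>\<in>schwartz. u (\<lambda>x. \<phi> x + \<psi> x) = u \<phi> + u \<psi>) \<and>
     (\<forall>\<phi>\<in>schwartz. \<forall>c. u (\<lambda>x. c * \<phi> x) = c * u \<phi>) \<and>
     (\<exists>C N. \<forall>\<phi>\<in>schwartz. norm (u \<phi>) \<le>
        C * (\<Sum>j\<le>N. \<Sum>k\<le>N. (SUP x. norm (complex_of_real x ^ j * dn k \<phi> x))))"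

definition in_S :: "((real \<Rightarrow> complex) \<Rightarrow> complex) \<Rightarrow> bool" where
  "in_S u \<longleftrightarrow> (\<exists>f\<in>schwartz. \<forall>\<phi>\<in>schwartz. u \<phi> = (LINT x|lborel. f x * \<phi> x))"

(* D = -i d/dx and M = multiplication by x on S'(R) *)
definition Dop :: "((real \<Rightarrow> complex) \<Rightarrow> complex) \<Rightarrow> (real \<Rightarrow> complex) \<Rightarrow> complex" where
  "Dop u = (\<lambda>\<phi>. \<i> * u (\<lambda>x. vector_derivative \<phi> (at x)))"

definition Mop :: "((real \<Rightarrow> complex) \<Rightarrow> complex) \<Rightarrow> (real \<Rightarrow> complex) \<Rightarrow> complex" where
  "Mop u = (\<lambda>\<phi>. u (\<lambda>x. complex_of_real x * \<phi> x))"

definition op_of :: "(nat \<Rightarrow> nat \<Rightarrow> complex) \<Rightarrow>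
     ((real \<Rightarrow> complex) \<Rightarrow> complex) \<Rightarrow> (real \<Rightarrow> complex) \<Rightarrow> complex" where
  "op_of c u = (\<lambda>\<phi>. \<Sum>k\<le>2. \<Sum>j\<le>2 - k. c k j * (Mop ^^ j) ((Dop ^^ k) u) \<phi>)"

definition op_transpose :: "(nat \<Rightarrow> nat \<Rightarrow> complex) \<Rightarrow>
     ((real \<Rightarrow> complex) \<Rightarrow> complex) \<Rightarrow> (real \<Rightarrow> complex) \<Rightarrow> complex" where
  "op_transpose c u = (\<lambda>\<phi>. \<Sum>k\<le>2. \<Sum>j\<le>2 - k. (-1) ^ k * c k j * (Dop ^^ k) ((Mop ^^ j) u) \<phi>)"

definition kernel_trivial :: "(((real \<Rightarrow> complex) \<Rightarrow> complex) \<Rightarrow> (real \<Rightarrow> complex) \<Rightarrow> complex) \<Rightarrow> bool" where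
  "kernel_trivial P \<longleftrightarrow> (\<forall>u. tempered u \<longrightarrow> (\<forall>\<phi>\<in>schwartz. P u \<phi> = 0) \<longrightarrow> (\<forall>\<phi>\<in>schwartz. u \<phi> = 0))"

definition globally_regular :: "(((real \<Rightarrow> complex) \<Rightarrow> complex) \<Rightarrow> (real \<Rightarrow> complex) \<Rightarrow> complex) \<Rightarrow> bool" where
  "globally_regular P \<longleftrightarrow> (\<forall>u. tempered u \<longrightarrow> in_S (P u) \<longrightarrow> in_S u)"

definition weyl_symbol :: "(nat \<Rightarrow> nat \<Rightarrow> complex) \<Rightarrow> real \<Rightarrow> real \<Rightarrow> complex" where
  "weyl_symbol c x \<xi> = c 2 0 * \<xi>^2 + c 1 1 * x * \<xi> + c 0 2 * x^2 + c 1 0 * \<xi> + c 0 1 * x + c 0 0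
      + (\<i> / 2) * c 1 1"

definition sympl_equiv :: "(real \<Rightarrow> real \<Rightarrow> complex) \<Rightarrow> (real \<Rightarrow> real \<Rightarrow> complex) \<Rightarrow> bool" where
  "sympl_equiv p q \<longleftrightarrow> (\<exists>m11 m12 m21 m22 :: real. m11 * m22 - m12 * m21 = 1 \<and>
       (\<forall>x \<xi>. q x \<xi> = p (m11 * x + m12 * \<xi>) (m21 * x + m22 * \<xi>)))"

end

theory Submission
  imports Defs "HOL-Probability.Probability" "HOL-Real_Asymp.Real_Asymp"
begin

text \<open>Write \<open>op_of c\<close> on \<open>S'(\<real>)\<close> as \<open>u \<mapsto> u \<circ> L\<close>, where \<open>L = test_op c\<close>, its formal transpose, is a
  second order operator on \<open>S(\<real>)\<close> determined by the Weyl symbol of \<open>c\<close>. If \<open>A\<close> is an automorphism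
  of \<open>S(\<real>)\<close> whose transpose also preserves \<open>S(\<real>)\<close>, and \<open>A L\<^sub>q = L\<^sub>p A\<close>, then \<open>u \<mapsto> u \<circ> A\<^sup>-\<^sup>1\<close>
  matches the kernels and the regular solutions of the two dual operators. Dilations,
  multiplication by chirps \<open>exp (-\<i> s x\<^sup>2/2)\<close> and the Fourier transform are such automorphisms;
  conjugation by them composes the Weyl symbol with a diagonal matrix, a shear and the rotation by
  \<open>\<pi>/2\<close>, which generate \<open>SL(2, \<real>)\<close>. The transposes have the symbols \<open>p (x, -\<xi>)\<close>, which are
  again symplectically equivalent.\<close>

section \<open>Seminorms and continuous maps of the Schwartz space\<close>

lemma dn_Suc_dn1: "dn (Suc k) f = dn k (dn 1 f)"
  by (induction k arbitrary: f) auto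

lemma dn1_eqI: "(\<And>x. (f has_vector_derivative f' x) (at x)) \<Longrightarrow> dn 1 f = f'"
  by (auto intro!: ext vector_derivative_at)

declare dn.simps(2)[simp del]

lemma schwartzI:
  assumes "\<And>k x. (dn k \<phi> has_vector_derivative dn (Suc k) \<phi> x) (at x)"
    and "\<And>j k. \<exists>C. \<forall>x. norm (complex_of_real x ^ j * dn k \<phi> x) \<le> C"
  shows "\<phi> \<in> schwartz"
  using assms unfolding schwartz_def by blast

lemma schwartz_deriv: "\<phi> \<in> schwartz \<Longrightarrow> (dn k \<phi> has_vector_derivative dn (Suc k) \<phi> x) (at x)"
  unfolding schwartz_def by blast

lemma schwartz_deriv0: "\<phi> \<in> schwartz \<Longrightarrow> (\<phi> has_vector_derivative dn 1 \<phi> x) (at x)"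
  using schwartz_deriv[of \<phi> 0 x] by simp

lemma schwartz_continuous: "\<phi> \<in> schwartz \<Longrightarrow> isCont (dn k \<phi>) x"
  using schwartz_deriv has_vector_derivative_continuous by blast

definition snorm :: "nat \<Rightarrow> nat \<Rightarrow> (real \<Rightarrow> complex) \<Rightarrow> real" where
  "snorm j k \<phi> = (SUP x. norm (complex_of_real x ^ j * dn k \<phi> x))"

definition snorms :: "nat \<Rightarrow> (real \<Rightarrow> complex) \<Rightarrow> real" where
  "snorms N \<phi> = (\<Sum>j\<le>N. \<Sum>k\<le>N. snorm j k \<phi>)"

lemma snorm_upper: "\<phi> \<in> schwartz \<Longrightarrow> norm (complex_of_real x ^ j * dn k \<phi> x) \<le> snorm j k \<phi>"
proof -
  assume "\<phi> \<in> schwartz"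
  then obtain C where "\<forall>x. norm (complex_of_real x ^ j * dn k \<phi> x) \<le> C"
    unfolding schwartz_def by blast
  then show ?thesis
    unfolding snorm_def by (intro cSUP_upper bdd_aboveI2) auto
qed

lemma snorm_least: "(\<And>x. norm (complex_of_real x ^ j * dn k \<phi> x) \<le> B) \<Longrightarrow> snorm j k \<phi> \<le> B"
  unfolding snorm_def by (rule cSUP_least) auto

lemma snorm_nonneg: "\<phi> \<in> schwartz \<Longrightarrow> 0 \<le> snorm j k \<phi>"
  using snorm_upper[of \<phi> 0 j k] norm_ge_zero order_trans by blast

lemma snorms_nonneg: "\<phi> \<in> schwartz \<Longrightarrow> 0 \<le> snorms N \<phi>"
  unfolding snorms_def by (intro sum_nonneg) (auto simp: snorm_nonneg)

lemma snorm_le_snorms: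
  assumes "\<phi> \<in> schwartz" "j \<le> N" "k \<le> N"
  shows "snorm j k \<phi> \<le> snorms N \<phi>"
proof -
  have "snorm j k \<phi> \<le> (\<Sum>k\<le>N. snorm j k \<phi>)"
    using assms by (intro member_le_sum) (auto simp: snorm_nonneg)
  also have "\<dots> \<le> snorms N \<phi>"
    unfolding snorms_def using assms
    by (intro member_le_sum[where f = "\<lambda>j. \<Sum>k\<le>N. snorm j k \<phi>"])
       (auto intro!: sum_nonneg simp: snorm_nonneg)
  finally show ?thesis .
qed

lemma snorms_mono: "\<phi> \<in> schwartz \<Longrightarrow> N \<le> N' \<Longrightarrow> snorms N \<phi> \<le> snorms N' \<phi>"
  unfolding snorms_def
  by (intro order_trans[OF sum_mono[OF sum_mono2] sum_mono2])
     (auto intro!: sum_nonneg simp: snorm_nonneg)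

definition snorm_dominated :: "((real \<Rightarrow> complex) \<Rightarrow> real) \<Rightarrow> bool" where
  "snorm_dominated G \<longleftrightarrow> (\<exists>C N. \<forall>\<phi>\<in>schwartz. G \<phi> \<le> C * snorms N \<phi>)"

definition seminorm_bounded :: "((real \<Rightarrow> complex) \<Rightarrow> real \<Rightarrow> complex) \<Rightarrow> bool" where
  "seminorm_bounded F \<longleftrightarrow>
     (\<exists>G. snorm_dominated G \<and> (\<forall>\<phi>\<in>schwartz. \<forall>x. norm (F \<phi> x) \<le> G \<phi>))"

text \<open>A map of \<open>S(\<real>)\<close> into itself that is continuous; linearity is a separate condition.\<close>

definition schwartz_map :: "((real \<Rightarrow> complex) \<Rightarrow> real \<Rightarrow> complex) \<Rightarrow> bool" where
  "schwartz_map A \<longleftrightarrow> (\<forall>\<phi>\<in>schwartz. A \<phi> \<in> schwartz) \<and>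
     (\<forall>j k. seminorm_bounded (\<lambda>\<phi> x. complex_of_real x ^ j * dn k (A \<phi>) x))"

lemma snorm_dominatedE:
  assumes "snorm_dominated G"
  obtains C N where "C \<ge> 0" "\<And>\<phi>. \<phi> \<in> schwartz \<Longrightarrow> G \<phi> \<le> C * snorms N \<phi>"
proof -
  obtain C N where CN: "\<forall>\<phi>\<in>schwartz. G \<phi> \<le> C * snorms N \<phi>"
    using assms unfolding snorm_dominated_def by blast
  have "G \<phi> \<le> \<bar>C\<bar> * snorms N \<phi>" if "\<phi> \<in> schwartz" for \<phi>
    using CN that snorms_nonneg[OF that, of N] by (meson abs_ge_self mult_right_mono order_trans)
  then show thesis using that[of "\<bar>C\<bar>" N] by simp
qed

lemma snorm_dominated_mono:
  "snorm_dominated H \<Longrightarrow> (\<And>\<phi>. \<phi> \<in> schwartz \<Longrightarrow> G \<phi> \<le> H \<phi>) \<Longrightarrow> snorm_dominated G"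
  unfolding snorm_dominated_def by (meson order_trans)

lemma snorm_dominated_snorm: "snorm_dominated (snorm j k)"
  unfolding snorm_dominated_def using snorm_le_snorms[of _ j "j + k" k]
  by (intro exI[of _ 1] exI[of _ "j + k"]) auto

lemma snorm_dominated_add:
  assumes "snorm_dominated G" "snorm_dominated H"
  shows "snorm_dominated (\<lambda>\<phi>. G \<phi> + H \<phi>)"
proof -
  obtain C N where "C \<ge> 0" and CN: "\<And>\<phi>. \<phi> \<in> schwartz \<Longrightarrow> G \<phi> \<le> C * snorms N \<phi>"
    using snorm_dominatedE[OF assms(1)] by blast
  obtain C' N' where "C' \<ge> 0" and CN': "\<And>\<phi>. \<phi> \<in> schwartz \<Longrightarrow> H \<phi> \<le> C' * snorms N' \<phi>"
    using snorm_dominatedE[OF assms(2)] by blast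
  have "G \<phi> + H \<phi> \<le> (C + C') * snorms (max N N') \<phi>" if \<phi>: "\<phi> \<in> schwartz" for \<phi>
  proof -
    have "G \<phi> \<le> C * snorms (max N N') \<phi>"
      using CN[OF \<phi>] snorms_mono[OF \<phi>, of N "max N N'"] \<open>C \<ge> 0\<close>
      by (meson max.cobounded1 mult_left_mono order_trans)
    moreover have "H \<phi> \<le> C' * snorms (max N N') \<phi>"
      using CN'[OF \<phi>] snorms_mono[OF \<phi>, of N' "max N N'"] \<open>C' \<ge> 0\<close>
      by (meson max.cobounded2 mult_left_mono order_trans)
    ultimately show ?thesis by (simp add: distrib_right)
  qed
  then show ?thesis unfolding snorm_dominated_def by blast
qed

lemma snorm_dominated_cmult: "c \<ge> 0 \<Longrightarrow> snorm_dominated G \<Longrightarrow> snorm_dominated (\<lambda>\<phi>. c * G \<phi>)"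
  unfolding snorm_dominated_def
  by (metis (no_types, opaque_lifting) mult.assoc mult_left_mono)

lemma snorm_dominated_sum:
  "finite I \<Longrightarrow> (\<And>i. i \<in> I \<Longrightarrow> snorm_dominated (G i)) \<Longrightarrow> snorm_dominated (\<lambda>\<phi>. \<Sum>i\<in>I. G i \<phi>)"
proof (induction I rule: finite_induct)
  case empty
  have "snorm_dominated (\<lambda>\<phi>. 0)" unfolding snorm_dominated_def by (rule exI[of _ 0]) simp
  then show ?case by simp
next
  case (insert i I)
  then show ?case by (simp add: snorm_dominated_add)
qed

lemma seminorm_bounded_snorm:
  assumes "seminorm_bounded (\<lambda>\<phi> x. complex_of_real x ^ j * dn k (A \<phi>) x)"
  shows "snorm_dominated (\<lambda>\<phi>. snorm j k (A \<phi>))"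
  using assms unfolding seminorm_bounded_def by (metis snorm_dominated_mono snorm_least)

lemma snorm_dominated_snorms:
  assumes "schwartz_map A"
  shows "snorm_dominated (\<lambda>\<phi>. snorms N (A \<phi>))"
  unfolding snorms_def using assms unfolding schwartz_map_def
  by (intro snorm_dominated_sum seminorm_bounded_snorm) auto

lemma snorm_dominated_comp:
  assumes "snorm_dominated G" "schwartz_map A"
  shows "snorm_dominated (\<lambda>\<phi>. G (A \<phi>))"
proof -
  obtain C N where "C \<ge> 0" and CN: "\<And>\<phi>. \<phi> \<in> schwartz \<Longrightarrow> G \<phi> \<le> C * snorms N \<phi>"
    using snorm_dominatedE[OF assms(1)] by blast
  moreover have "\<phi> \<in> schwartz \<Longrightarrow> A \<phi> \<in> schwartz" for \<phi>
    using assms(2) unfolding schwartz_map_def by blast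
  ultimately show ?thesis
    by (intro snorm_dominated_mono[OF snorm_dominated_cmult[OF \<open>C \<ge> 0\<close> snorm_dominated_snorms[OF assms(2)]]])
       auto
qed

lemma seminorm_boundedI:
  "snorm_dominated G \<Longrightarrow> (\<And>\<phi> x. \<phi> \<in> schwartz \<Longrightarrow> norm (F \<phi> x) \<le> G \<phi>) \<Longrightarrow> seminorm_bounded F"
  unfolding seminorm_bounded_def by blast

lemma seminorm_bounded_comp:
  assumes "seminorm_bounded F" "schwartz_map A"
  shows "seminorm_bounded (\<lambda>\<phi>. F (A \<phi>))"
proof -
  obtain G where "snorm_dominated G" and G: "\<forall>\<phi>\<in>schwartz. \<forall>x. norm (F \<phi> x) \<le> G \<phi>"
    using assms(1) unfolding seminorm_bounded_def by blast
  then show ?thesis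
    using assms(2) unfolding schwartz_map_def
    by (intro seminorm_boundedI[OF snorm_dominated_comp[OF _ assms(2)]]) auto
qed

lemma seminorm_bounded_lin:
  assumes "seminorm_bounded F" "seminorm_bounded G"
  shows "seminorm_bounded (\<lambda>\<phi> x. a * F \<phi> x + b * G \<phi> x)"
proof -
  obtain F' G' where "snorm_dominated F'" "snorm_dominated G'"
    and F': "\<forall>\<phi>\<in>schwartz. \<forall>x. norm (F \<phi> x) \<le> F' \<phi>"
    and G': "\<forall>\<phi>\<in>schwartz. \<forall>x. norm (G \<phi> x) \<le> G' \<phi>"
    using assms unfolding seminorm_bounded_def by blast
  show ?thesis
  proof (rule seminorm_boundedI)
    show "snorm_dominated (\<lambda>\<phi>. norm a * F' \<phi> + norm b * G' \<phi>)"
      by (intro snorm_dominated_add snorm_dominated_cmult)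
         (simp_all add: \<open>snorm_dominated F'\<close> \<open>snorm_dominated G'\<close>)
    fix \<phi> x assume "\<phi> \<in> schwartz"
    then show "norm (a * F \<phi> x + b * G \<phi> x) \<le> norm a * F' \<phi> + norm b * G' \<phi>"
      using F' G' norm_triangle_ineq[of "a * F \<phi> x" "b * G \<phi> x"]
      by (smt (verit, ccfv_SIG) mult_left_mono norm_ge_zero norm_mult)
  qed
qed

lemma seminorm_bounded_monomial: "seminorm_bounded (\<lambda>\<phi> x. complex_of_real x ^ j * dn k \<phi> x)"
  by (rule seminorm_boundedI[OF snorm_dominated_snorm]) (rule snorm_upper)

lemma schwartz_mapD: "schwartz_map A \<Longrightarrow> \<phi> \<in> schwartz \<Longrightarrow> A \<phi> \<in> schwartz"
  unfolding schwartz_map_def by blast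

lemma schwartz_map_id: "schwartz_map (\<lambda>\<phi>. \<phi>)"
  unfolding schwartz_map_def by (simp add: seminorm_bounded_monomial)

lemma schwartz_map_comp:
  assumes "schwartz_map A" "schwartz_map B"
  shows "schwartz_map (\<lambda>\<phi>. A (B \<phi>))"
  using assms seminorm_bounded_comp[of "\<lambda>\<phi> x. complex_of_real x ^ _ * dn _ (A \<phi>) x" B]
  unfolding schwartz_map_def by auto

lemma schwartz_map_funpow: "schwartz_map A \<Longrightarrow> schwartz_map (A ^^ n)"
  by (induction n) (auto simp: schwartz_map_id[unfolded id_def[symmetric]] schwartz_map_comp o_def)

lemma seminorm_bounded_cong:
  "seminorm_bounded F \<Longrightarrow> (\<And>\<phi> x. \<phi> \<in> schwartz \<Longrightarrow> G \<phi> x = F \<phi> x) \<Longrightarrow> seminorm_bounded G"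
  unfolding seminorm_bounded_def by metis

lemma dn_Suc_outer: "dn (Suc k) f = dn 1 (dn k f)"
  by (simp add: dn.simps)

lemma dn_add:
  assumes "\<phi> \<in> schwartz" "\<psi> \<in> schwartz"
  shows "dn k (\<lambda>x. \<phi> x + \<psi> x) = (\<lambda>x. dn k \<phi> x + dn k \<psi> x)"
proof (induction k)
  case (Suc k)
  have "dn (Suc k) (\<lambda>x. \<phi> x + \<psi> x) = dn 1 (\<lambda>x. dn k \<phi> x + dn k \<psi> x)"
    by (simp only: dn_Suc_outer[of k] Suc)
  also have "\<dots> = (\<lambda>x. dn (Suc k) \<phi> x + dn (Suc k) \<psi> x)"
    by (intro dn1_eqI has_vector_derivative_add schwartz_deriv assms)
  finally show ?case .
qed simp

lemma dn_cmult:
  assumes "\<phi> \<in> schwartz"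
  shows "dn k (\<lambda>x. c * \<phi> x) = (\<lambda>x. c * dn k \<phi> x)"
proof (induction k)
  case (Suc k)
  have "dn (Suc k) (\<lambda>x. c * \<phi> x) = dn 1 (\<lambda>x. c * dn k \<phi> x)"
    by (simp only: dn_Suc_outer[of k] Suc)
  also have "\<dots> = (\<lambda>x. c * dn (Suc k) \<phi> x)"
    by (intro dn1_eqI has_vector_derivative_mult_right schwartz_deriv assms)
  finally show ?case .
qed simp

lemma has_vector_derivative_complex_of_real: "(complex_of_real has_vector_derivative 1) (at x)"
  using has_vector_derivative_of_real[OF DERIV_ident, of "at x"] by simp

lemma has_vector_derivative_xmult_dn:
  assumes "\<phi> \<in> schwartz"
  shows "((\<lambda>x. complex_of_real x * dn k \<phi> x + of_nat k * dn (k - 1) \<phi> x) has_vector_derivative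
      complex_of_real x * dn (Suc k) \<phi> x + of_nat (Suc k) * dn k \<phi> x) (at x)"
proof -
  have d: "((\<lambda>x. of_nat k * dn (k - 1) \<phi> x) has_vector_derivative of_nat k * dn k \<phi> x) (at x)"
  proof (cases k)
    case (Suc m)
    then show ?thesis
      using has_vector_derivative_mult_right[OF schwartz_deriv[OF assms, of m x], of "of_nat k"] by simp
  qed (simp only: of_nat_0 mult_zero_left has_vector_derivative_const)
  show ?thesis
    by (rule has_vector_derivative_eq_rhs,
        rule has_vector_derivative_add[OF has_vector_derivative_mult d],
        rule has_vector_derivative_complex_of_real, rule schwartz_deriv[OF assms])
       (simp add: algebra_simps)
qed

text \<open>At \<open>k = 0\<close> the truncated \<open>k - 1\<close> is harmless: that term carries the factor \<open>k\<close>.\<close>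

lemma dn_xmult:
  assumes "\<phi> \<in> schwartz"
  shows "dn k (\<lambda>x. complex_of_real x * \<phi> x)
    = (\<lambda>x. complex_of_real x * dn k \<phi> x + of_nat k * dn (k - 1) \<phi> x)"
proof (induction k)
  case (Suc k)
  have "dn (Suc k) (\<lambda>x. complex_of_real x * \<phi> x)
      = dn 1 (\<lambda>x. complex_of_real x * dn k \<phi> x + of_nat k * dn (k - 1) \<phi> x)"
    by (simp only: dn_Suc_outer[of k] Suc)
  also have "\<dots> = (\<lambda>x. complex_of_real x * dn (Suc k) \<phi> x + of_nat (Suc k) * dn k \<phi> x)"
    by (intro dn1_eqI has_vector_derivative_xmult_dn assms)
  finally show ?case by simp
qed simp

lemma schwartz_cmult: "\<phi> \<in> schwartz \<Longrightarrow> (\<lambda>x. c * \<phi> x) \<in> schwartz"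
proof (rule schwartzI)
  assume \<phi>: "\<phi> \<in> schwartz"
  show "(dn k (\<lambda>x. c * \<phi> x) has_vector_derivative dn (Suc k) (\<lambda>x. c * \<phi> x) x) (at x)" for k x
    unfolding dn_cmult[OF \<phi>] by (intro has_vector_derivative_mult_right schwartz_deriv \<phi>)
  have "norm (complex_of_real x ^ j * dn k (\<lambda>x. c * \<phi> x) x) \<le> norm c * snorm j k \<phi>" for j k x
    unfolding dn_cmult[OF \<phi>] mult.left_commute[of _ c] norm_mult[of c]
    by (intro mult_left_mono snorm_upper \<phi>) auto
  then show "\<exists>C. \<forall>x. norm (complex_of_real x ^ j * dn k (\<lambda>x. c * \<phi> x) x) \<le> C" for j k
    by blast
qed

lemma schwartz_add: "\<phi> \<in> schwartz \<Longrightarrow> \<psi> \<in> schwartz \<Longrightarrow> (\<lambda>x. \<phi> x + \<psi> x) \<in> schwartz"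
proof (rule schwartzI)
  assume \<phi>: "\<phi> \<in> schwartz" and \<psi>: "\<psi> \<in> schwartz"
  show "(dn k (\<lambda>x. \<phi> x + \<psi> x) has_vector_derivative dn (Suc k) (\<lambda>x. \<phi> x + \<psi> x) x) (at x)" for k x
    unfolding dn_add[OF \<phi> \<psi>] by (intro has_vector_derivative_add schwartz_deriv \<phi> \<psi>)
  have "norm (complex_of_real x ^ j * dn k (\<lambda>x. \<phi> x + \<psi> x) x) \<le> snorm j k \<phi> + snorm j k \<psi>" for j k x
    unfolding dn_add[OF \<phi> \<psi>] distrib_left
    by (rule order_trans[OF norm_triangle_ineq add_mono[OF snorm_upper[OF \<phi>] snorm_upper[OF \<psi>]]])
  then show "\<exists>C. \<forall>x. norm (complex_of_real x ^ j * dn k (\<lambda>x. \<phi> x + \<psi> x) x) \<le> C" for j k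
    by blast
qed

lemma schwartz_lin: "\<phi> \<in> schwartz \<Longrightarrow> \<psi> \<in> schwartz \<Longrightarrow> (\<lambda>x. a * \<phi> x + b * \<psi> x) \<in> schwartz"
  by (intro schwartz_add schwartz_cmult)

lemma dn_lin:
  "\<phi> \<in> schwartz \<Longrightarrow> \<psi> \<in> schwartz \<Longrightarrow>
    dn k (\<lambda>x. a * \<phi> x + b * \<psi> x) = (\<lambda>x. a * dn k \<phi> x + b * dn k \<psi> x)"
  using dn_add[of "\<lambda>x. a * \<phi> x" "\<lambda>x. b * \<psi> x"] dn_cmult schwartz_cmult by simp

lemma schwartz_dn1: "\<phi> \<in> schwartz \<Longrightarrow> dn 1 \<phi> \<in> schwartz"
proof (rule schwartzI)
  assume \<phi>: "\<phi> \<in> schwartz"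
  show "(dn k (dn 1 \<phi>) has_vector_derivative dn (Suc k) (dn 1 \<phi>) x) (at x)" for k x
    using schwartz_deriv[OF \<phi>, of "Suc k" x] by (simp only: dn_Suc_dn1[of k] dn_Suc_dn1[of "Suc k"])
  show "\<exists>C. \<forall>x. norm (complex_of_real x ^ j * dn k (dn 1 \<phi>) x) \<le> C" for j k
    using snorm_upper[OF \<phi>, of _ j "Suc k"] by (auto simp only: dn_Suc_dn1[of k])
qed

lemma schwartz_dn: "\<phi> \<in> schwartz \<Longrightarrow> dn k \<phi> \<in> schwartz"
proof (induction k arbitrary: \<phi>)
  case (Suc k)
  then show ?case by (metis dn_Suc_dn1 schwartz_dn1)
qed simp

lemma schwartz_xmult: "\<phi> \<in> schwartz \<Longrightarrow> (\<lambda>x. complex_of_real x * \<phi> x) \<in> schwartz"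
proof (rule schwartzI)
  assume \<phi>: "\<phi> \<in> schwartz"
  show "(dn k (\<lambda>x. complex_of_real x * \<phi> x) has_vector_derivative
      dn (Suc k) (\<lambda>x. complex_of_real x * \<phi> x) x) (at x)" for k x
    using has_vector_derivative_xmult_dn[OF \<phi>] by (simp add: dn_xmult[OF \<phi>])
  have "norm (complex_of_real x ^ j * dn k (\<lambda>x. complex_of_real x * \<phi> x) x)
      \<le> snorm (Suc j) k \<phi> + of_nat k * snorm j (k - 1) \<phi>" for j k x
  proof -
    have "norm (complex_of_real x ^ j * dn k (\<lambda>x. complex_of_real x * \<phi> x) x)
       = norm (complex_of_real x ^ Suc j * dn k \<phi> x + of_nat k * (complex_of_real x ^ j * dn (k - 1) \<phi> x))"
      unfolding dn_xmult[OF \<phi>] by (simp add: algebra_simps)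
    also have "\<dots> \<le> snorm (Suc j) k \<phi> + of_nat k * snorm j (k - 1) \<phi>"
      by (rule order_trans[OF norm_triangle_ineq add_mono[OF snorm_upper[OF \<phi>]]])
         (simp only: norm_mult[of "of_nat k"] norm_of_nat, intro mult_left_mono snorm_upper[OF \<phi>], simp)
    finally show ?thesis .
  qed
  then show "\<exists>C. \<forall>x. norm (complex_of_real x ^ j * dn k (\<lambda>x. complex_of_real x * \<phi> x) x) \<le> C" for j k
    by blast
qed

lemma schwartz_xpow: "\<phi> \<in> schwartz \<Longrightarrow> (\<lambda>x. complex_of_real x ^ j * \<phi> x) \<in> schwartz"
  by (induction j) (simp_all add: mult.assoc schwartz_xmult)

lemma schwartz_diff: "\<phi> \<in> schwartz \<Longrightarrow> \<psi> \<in> schwartz \<Longrightarrow> (\<lambda>x. \<phi> x - \<psi> x) \<in> schwartz"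
  using schwartz_lin[of \<phi> \<psi> 1 "- 1"] by simp


lemma dn_diff:
  "\<phi> \<in> schwartz \<Longrightarrow> \<psi> \<in> schwartz \<Longrightarrow> dn k (\<lambda>x. \<phi> x - \<psi> x) = (\<lambda>x. dn k \<phi> x - dn k \<psi> x)"
  using dn_lin[of \<phi> \<psi> k 1 "- 1"] by simp


lemma schwartz_uminus: "\<phi> \<in> schwartz \<Longrightarrow> (\<lambda>x. - \<phi> x) \<in> schwartz"
  using schwartz_cmult[of \<phi> "- 1"] by simp


lemma dn_uminus: "\<phi> \<in> schwartz \<Longrightarrow> dn k (\<lambda>x. - \<phi> x) = (\<lambda>x. - dn k \<phi> x)"
  using dn_cmult[of \<phi> k "- 1"] by simp


lemma schwartz_divide: "\<phi> \<in> schwartz \<Longrightarrow> (\<lambda>x. \<phi> x / a) \<in> schwartz"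
  using schwartz_cmult[of \<phi> "inverse a"] by (simp add: field_simps)


lemma dn_divide: "\<phi> \<in> schwartz \<Longrightarrow> dn k (\<lambda>x. \<phi> x / a) = (\<lambda>x. dn k \<phi> x / a)"
  using dn_cmult[of \<phi> k "inverse a"] by (simp add: field_simps)

lemma schwartz_zero: "(\<lambda>x. 0) \<in> schwartz"
proof -
  have "dn k (\<lambda>x. 0) = (\<lambda>x. 0)" for k
  proof (induction k)
    case (Suc k)
    then show ?case by (simp only: dn_Suc_outer[of k] dn1_eqI[OF has_vector_derivative_const])
  qed simp
  then show ?thesis by (intro schwartzI) auto
qed

lemma schwartz_sum:
  "finite I \<Longrightarrow> (\<And>i. i \<in> I \<Longrightarrow> f i \<in> schwartz) \<Longrightarrow> (\<lambda>x. \<Sum>i\<in>I. f i x) \<in> schwartz"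
  by (induction I rule: finite_induct) (simp_all add: schwartz_zero schwartz_add)

lemma schwartz_map_dn1: "schwartz_map (dn 1)"
  unfolding schwartz_map_def
proof (intro conjI ballI allI)
  show "seminorm_bounded (\<lambda>\<phi> x. complex_of_real x ^ j * dn k (dn 1 \<phi>) x)" for j k
    using seminorm_bounded_monomial[of j "Suc k"] by (simp only: dn_Suc_dn1[of k])
qed (rule schwartz_dn1)

lemma schwartz_map_xmult: "schwartz_map (\<lambda>\<phi> x. complex_of_real x * \<phi> x)"
  unfolding schwartz_map_def
proof (intro conjI ballI allI)
  show "seminorm_bounded (\<lambda>\<phi> x. complex_of_real x ^ j * dn k (\<lambda>x. complex_of_real x * \<phi> x) x)" for j k
    by (rule seminorm_bounded_cong[OF seminorm_bounded_lin[OF seminorm_bounded_monomial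
          seminorm_bounded_monomial, of 1 "Suc j" k "of_nat k" j "k - 1"]])
       (simp add: dn_xmult, simp add: algebra_simps)
qed (rule schwartz_xmult)

lemma schwartz_map_lin:
  assumes "schwartz_map A" "schwartz_map B"
  shows "schwartz_map (\<lambda>\<phi> x. a * A \<phi> x + b * B \<phi> x)"
  unfolding schwartz_map_def
proof (intro conjI ballI allI)
  show "\<phi> \<in> schwartz \<Longrightarrow> (\<lambda>x. a * A \<phi> x + b * B \<phi> x) \<in> schwartz" for \<phi>
    using schwartz_lin schwartz_mapD[OF assms(1)] schwartz_mapD[OF assms(2)] by blast
  fix j k
  have "seminorm_bounded
      (\<lambda>\<phi> x. a * (complex_of_real x ^ j * dn k (A \<phi>) x) + b * (complex_of_real x ^ j * dn k (B \<phi>) x))"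
    using assms unfolding schwartz_map_def by (intro seminorm_bounded_lin) auto
  then show "seminorm_bounded (\<lambda>\<phi> x. complex_of_real x ^ j * dn k (\<lambda>x. a * A \<phi> x + b * B \<phi> x) x)"
    by (rule seminorm_bounded_cong)
       (simp add: dn_lin[OF schwartz_mapD[OF assms(1)] schwartz_mapD[OF assms(2)]]
         distrib_left mult.left_commute)
qed

lemma schwartz_map_scale: "schwartz_map A \<Longrightarrow> schwartz_map (\<lambda>\<phi> x. a * A \<phi> x)"
  using schwartz_map_lin[of A A a 0] by simp

lemma dn_intertwine:
  assumes dA: "\<And>\<phi>. \<phi> \<in> schwartz \<Longrightarrow> dn 1 (A \<phi>) = A (D \<phi>)" and D: "schwartz_map D"
  shows "\<phi> \<in> schwartz \<Longrightarrow> dn k (A \<phi>) = A ((D ^^ k) \<phi>)"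
proof (induction k arbitrary: \<phi>)
  case (Suc k)
  then show ?case
    using dA[OF Suc.prems] Suc.IH[OF schwartz_mapD[OF D Suc.prems]]
    by (simp add: dn_Suc_dn1[of k] funpow_swap1)
qed simp

lemma xpow_intertwine:
  assumes xA: "\<And>\<phi>. \<phi> \<in> schwartz \<Longrightarrow> (\<lambda>x. complex_of_real x * A \<phi> x) = A (E \<phi>)"
    and E: "schwartz_map E"
  shows "\<phi> \<in> schwartz \<Longrightarrow> (\<lambda>x. complex_of_real x ^ j * A \<phi> x) = A ((E ^^ j) \<phi>)"
proof (induction j arbitrary: \<phi>)
  case (Suc j)
  have "(\<lambda>x. complex_of_real x ^ Suc j * A \<phi> x) = (\<lambda>x. complex_of_real x ^ j * A (E \<phi>) x)"
    using xA[OF Suc.prems] by (auto simp: fun_eq_iff mult_ac dest: fun_cong)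
  then show ?case
    using Suc.IH[OF schwartz_mapD[OF E Suc.prems]] by (simp add: funpow_swap1)
qed simp

text \<open>Since \<open>x\<^sup>j \<partial>\<^sup>k (A \<phi>) = A (E\<^sup>j D\<^sup>k \<phi>)\<close>, the seminorms of \<open>A \<phi>\<close> reduce to the bound on \<open>A\<close>
  itself.\<close>

lemma schwartz_map_transfer:
  assumes deriv: "\<And>\<phi> x. \<phi> \<in> schwartz \<Longrightarrow> (A \<phi> has_vector_derivative A (D \<phi>) x) (at x)"
    and xA: "\<And>\<phi>. \<phi> \<in> schwartz \<Longrightarrow> (\<lambda>x. complex_of_real x * A \<phi> x) = A (E \<phi>)"
    and D: "schwartz_map D" and E: "schwartz_map E"
    and bound: "seminorm_bounded A"
  shows "schwartz_map A"
proof -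
  have dA: "\<And>\<phi>. \<phi> \<in> schwartz \<Longrightarrow> dn 1 (A \<phi>) = A (D \<phi>)"
    by (rule dn1_eqI) (rule deriv)
  have dn_A: "\<And>k \<phi>. \<phi> \<in> schwartz \<Longrightarrow> dn k (A \<phi>) = A ((D ^^ k) \<phi>)"
    using dn_intertwine[where A = A and D = D] dA D by blast
  have xpow_A: "\<And>j \<phi>. \<phi> \<in> schwartz \<Longrightarrow> (\<lambda>x. complex_of_real x ^ j * A \<phi> x) = A ((E ^^ j) \<phi>)"
    using xpow_intertwine[where A = A and E = E] xA E by blast
  have monomial: "complex_of_real x ^ j * dn k (A \<phi>) x = A ((E ^^ j) ((D ^^ k) \<phi>)) x"
    if "\<phi> \<in> schwartz" for j k \<phi> x
  proof -
    have "(D ^^ k) \<phi> \<in> schwartz" using schwartz_map_funpow[OF D] that by (rule schwartz_mapD)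
    then show ?thesis by (simp add: dn_A[OF that] xpow_A[symmetric])
  qed
  have bounded: "seminorm_bounded (\<lambda>\<phi> x. complex_of_real x ^ j * dn k (A \<phi>) x)" for j k
    by (rule seminorm_bounded_cong[OF seminorm_bounded_comp[OF bound
          schwartz_map_comp[OF schwartz_map_funpow[OF E] schwartz_map_funpow[OF D]]]])
       (rule monomial)
  have "A \<phi> \<in> schwartz" if "\<phi> \<in> schwartz" for \<phi>
  proof (rule schwartzI)
    show "(dn k (A \<phi>) has_vector_derivative dn (Suc k) (A \<phi>) x) (at x)" for k x
      using deriv[OF schwartz_mapD[OF schwartz_map_funpow[OF D, of k] that], of x]
      by (simp add: dn_A[OF that])
    show "\<exists>C. \<forall>x. norm (complex_of_real x ^ j * dn k (A \<phi>) x) \<le> C" for j k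
      using bounded[of j k] that unfolding seminorm_bounded_def by blast
  qed
  then show ?thesis
    unfolding schwartz_map_def using bounded by blast
qed

lemma integrable_inverse_1_plus_square_lborel: "integrable lborel (\<lambda>x::real. inverse (1 + x\<^sup>2))"
  using integrable_inverse_1_plus_square unfolding set_integrable_def einterval_eq_UNIV by simp

lemma integral_inverse_1_plus_square_lborel: "(LINT x|lborel. inverse (1 + x\<^sup>2)) = pi"
  using LBINT_inverse_1_plus_square
  unfolding interval_lebesgue_integral_def set_lebesgue_integral_def einterval_eq_UNIV by simp

lemma schwartz_decay:
  assumes "\<phi> \<in> schwartz"
  shows "norm (\<phi> x) \<le> (snorm 0 0 \<phi> + snorm 2 0 \<phi>) * inverse (1 + x\<^sup>2)"
proof -
  have "norm (\<phi> x) * (1 + x\<^sup>2) = norm (\<phi> x) + norm (complex_of_real x ^ 2 * \<phi> x)"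
    by (simp add: norm_mult norm_power algebra_simps)
  also have "\<dots> \<le> snorm 0 0 \<phi> + snorm 2 0 \<phi>"
    using snorm_upper[OF assms, of x 0 0] snorm_upper[OF assms, of x 2 0] by (intro add_mono) auto
  finally show ?thesis
    by (simp add: field_simps add_pos_nonneg)
qed

lemma schwartz_borel_measurable: "\<phi> \<in> schwartz \<Longrightarrow> \<phi> \<in> borel_measurable lborel"
  using schwartz_continuous[of \<phi> _ 0]
  by (auto intro!: borel_measurable_continuous_onI continuous_at_imp_continuous_on)

lemma schwartz_integrable: "\<phi> \<in> schwartz \<Longrightarrow> integrable lborel \<phi>"
proof (rule Bochner_Integration.integrable_bound[where
      f = "\<lambda>x. (snorm 0 0 \<phi> + snorm 2 0 \<phi>) * inverse (1 + x\<^sup>2)"])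
  assume \<phi>: "\<phi> \<in> schwartz"
  show "integrable lborel (\<lambda>x. (snorm 0 0 \<phi> + snorm 2 0 \<phi>) * inverse (1 + x\<^sup>2))"
    using integrable_inverse_1_plus_square_lborel by simp
  show "\<phi> \<in> borel_measurable lborel" using schwartz_borel_measurable[OF \<phi>] .
  show "AE x in lborel. norm (\<phi> x) \<le> norm ((snorm 0 0 \<phi> + snorm 2 0 \<phi>) * inverse (1 + x\<^sup>2))"
    using schwartz_decay[OF \<phi>] by (auto intro!: AE_I2 order_trans[OF _ abs_ge_self])
qed

lemma integrable_bounded_mult_schwartz:
  assumes "\<phi> \<in> schwartz" "g \<in> borel_measurable lborel" "\<And>x. norm (g x) \<le> B"
  shows "integrable lborel (\<lambda>x. g x * \<phi> x :: complex)"
proof (rule Bochner_Integration.integrable_bound[where f = "\<lambda>x. B * norm (\<phi> x)"])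
  show "integrable lborel (\<lambda>x. B * norm (\<phi> x))" using schwartz_integrable[OF assms(1)] by auto
  show "(\<lambda>x. g x * \<phi> x) \<in> borel_measurable lborel"
    using assms(2) schwartz_borel_measurable[OF assms(1)] by measurable
  show "AE x in lborel. norm (g x * \<phi> x) \<le> norm (B * norm (\<phi> x))"
    using assms(3) by (intro AE_I2) (simp add: norm_mult mult_right_mono order_trans[OF _ abs_ge_self])
qed

lemma schwartz_L1_bound:
  assumes "\<phi> \<in> schwartz"
  shows "(LINT x|lborel. norm (\<phi> x)) \<le> pi * (snorm 0 0 \<phi> + snorm 2 0 \<phi>)"
proof -
  have "(LINT x|lborel. norm (\<phi> x)) \<le> (LINT x|lborel. (snorm 0 0 \<phi> + snorm 2 0 \<phi>) * inverse (1 + x\<^sup>2))"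
    using schwartz_integrable[OF assms] integrable_inverse_1_plus_square_lborel schwartz_decay[OF assms]
    by (intro integral_mono) auto
  also have "\<dots> = pi * (snorm 0 0 \<phi> + snorm 2 0 \<phi>)"
    using integral_inverse_1_plus_square_lborel by simp
  finally show ?thesis .
qed

section \<open>Tempered distributions and conjugation by automorphisms of the Schwartz space\<close>

definition linear_functional :: "((real \<Rightarrow> complex) \<Rightarrow> complex) \<Rightarrow> bool" where
  "linear_functional u \<longleftrightarrow>
     (\<forall>\<phi>\<in>schwartz. \<forall>\<psi>\<in>schwartz. u (\<lambda>x. \<phi> x + \<psi> x) = u \<phi> + u \<psi>) \<and>
     (\<forall>\<phi>\<in>schwartz. \<forall>c. u (\<lambda>x. c * \<phi> x) = c * u \<phi>)"

definition schwartz_linear :: "((real \<Rightarrow> complex) \<Rightarrow> real \<Rightarrow> complex) \<Rightarrow> bool" where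
  "schwartz_linear A \<longleftrightarrow> (\<forall>x. linear_functional (\<lambda>\<phi>. A \<phi> x))"

lemma linear_functional_add:
  "linear_functional u \<Longrightarrow> \<phi> \<in> schwartz \<Longrightarrow> \<psi> \<in> schwartz \<Longrightarrow> u (\<lambda>x. \<phi> x + \<psi> x) = u \<phi> + u \<psi>"
  unfolding linear_functional_def by blast

lemma linear_functional_cmult:
  "linear_functional u \<Longrightarrow> \<phi> \<in> schwartz \<Longrightarrow> u (\<lambda>x. c * \<phi> x) = c * u \<phi>"
  unfolding linear_functional_def by blast

lemma linear_functional_sum:
  assumes "linear_functional u"
  shows "finite I \<Longrightarrow> (\<And>i. i \<in> I \<Longrightarrow> f i \<in> schwartz) \<Longrightarrow> u (\<lambda>x. \<Sum>i\<in>I. f i x) = (\<Sum>i\<in>I. u (f i))"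
proof (induction I rule: finite_induct)
  case empty
  show ?case using linear_functional_cmult[OF assms schwartz_zero, of 0] by simp
next
  case (insert i I)
  then show ?case by (simp add: linear_functional_add[OF assms] schwartz_sum)
qed

lemma schwartz_linear_add:
  "schwartz_linear A \<Longrightarrow> \<phi> \<in> schwartz \<Longrightarrow> \<psi> \<in> schwartz \<Longrightarrow> A (\<lambda>x. \<phi> x + \<psi> x) = (\<lambda>x. A \<phi> x + A \<psi> x)"
  unfolding schwartz_linear_def using linear_functional_add[of "\<lambda>\<phi>. A \<phi> _"] by auto

lemma schwartz_linear_cmult:
  "schwartz_linear A \<Longrightarrow> \<phi> \<in> schwartz \<Longrightarrow> A (\<lambda>x. c * \<phi> x) = (\<lambda>x. c * A \<phi> x)"
  unfolding schwartz_linear_def using linear_functional_cmult[of "\<lambda>\<phi>. A \<phi> _"] by auto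

lemma tempered_linear: "tempered u \<Longrightarrow> linear_functional u"
  unfolding tempered_def linear_functional_def by blast

lemma tempered_dominated: "tempered u \<Longrightarrow> snorm_dominated (\<lambda>\<phi>. norm (u \<phi>))"
  unfolding tempered_def snorm_dominated_def snorms_def snorm_def by blast

lemma tempered_comp:
  assumes u: "tempered u" and A: "schwartz_map A" "schwartz_linear A"
  shows "tempered (\<lambda>\<phi>. u (A \<phi>))"
proof -
  have "linear_functional (\<lambda>\<phi>. u (A \<phi>))"
    using tempered_linear[OF u] A
    by (simp add: linear_functional_def schwartz_linear_add schwartz_linear_cmult schwartz_mapD)
  moreover have "snorm_dominated (\<lambda>\<phi>. norm (u (A \<phi>)))"
    by (rule snorm_dominated_comp[OF tempered_dominated[OF u] A(1)])
  ultimately show ?thesis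
    unfolding tempered_def linear_functional_def snorm_dominated_def snorms_def snorm_def by blast
qed

lemma kernel_trivial_globally_regular_cong:
  assumes "\<And>u \<phi>. tempered u \<Longrightarrow> \<phi> \<in> schwartz \<Longrightarrow> P u \<phi> = Q u \<phi>"
  shows "(kernel_trivial P \<longleftrightarrow> kernel_trivial Q) \<and> (globally_regular P \<longleftrightarrow> globally_regular Q)"
proof -
  have "in_S (P u) \<longleftrightarrow> in_S (Q u)" if "tempered u" for u
    using assms[OF that] unfolding in_S_def by auto
  then show ?thesis unfolding kernel_trivial_def globally_regular_def using assms by auto
qed

text \<open>The transpose of \<open>A\<close>, restricted to functions \<open>f \<in> S(\<real>)\<close> viewed as distributions, takes
  values in \<open>S(\<real>)\<close>.\<close>

definition schwartz_transposable :: "((real \<Rightarrow> complex) \<Rightarrow> real \<Rightarrow> complex) \<Rightarrow> bool" where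
  "schwartz_transposable A \<longleftrightarrow> (\<forall>f\<in>schwartz. \<exists>g\<in>schwartz. \<forall>\<phi>\<in>schwartz.
      (LINT x|lborel. f x * A \<phi> x) = (LINT x|lborel. g x * \<phi> x))"

definition schwartz_iso :: "((real \<Rightarrow> complex) \<Rightarrow> real \<Rightarrow> complex) \<Rightarrow>
    ((real \<Rightarrow> complex) \<Rightarrow> real \<Rightarrow> complex) \<Rightarrow> bool" where
  "schwartz_iso A B \<longleftrightarrow>
     schwartz_map A \<and> schwartz_linear A \<and> schwartz_transposable A \<and>
     schwartz_map B \<and> schwartz_linear B \<and> schwartz_transposable B \<and>
     (\<forall>\<phi>\<in>schwartz. A (B \<phi>) = \<phi>) \<and> (\<forall>\<phi>\<in>schwartz. B (A \<phi>) = \<phi>)"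

lemma schwartz_iso_sym: "schwartz_iso A B \<Longrightarrow> schwartz_iso B A"
  unfolding schwartz_iso_def by blast

definition dual_op :: "((real \<Rightarrow> complex) \<Rightarrow> real \<Rightarrow> complex) \<Rightarrow>
    ((real \<Rightarrow> complex) \<Rightarrow> complex) \<Rightarrow> (real \<Rightarrow> complex) \<Rightarrow> complex" where
  "dual_op L u = (\<lambda>\<phi>. u (L \<phi>))"

definition equally_regular :: "((real \<Rightarrow> complex) \<Rightarrow> real \<Rightarrow> complex) \<Rightarrow>
    ((real \<Rightarrow> complex) \<Rightarrow> real \<Rightarrow> complex) \<Rightarrow> bool" where
  "equally_regular L L' \<longleftrightarrow>
     (kernel_trivial (dual_op L) \<longleftrightarrow> kernel_trivial (dual_op L')) \<and>
     (globally_regular (dual_op L) \<longleftrightarrow> globally_regular (dual_op L'))"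

lemma in_S_cong: "in_S u \<Longrightarrow> (\<And>\<phi>. \<phi> \<in> schwartz \<Longrightarrow> v \<phi> = u \<phi>) \<Longrightarrow> in_S v"
  unfolding in_S_def by auto

lemma in_S_comp:
  assumes "in_S w" "schwartz_transposable C" "\<And>\<phi>. \<phi> \<in> schwartz \<Longrightarrow> C \<phi> \<in> schwartz"
  shows "in_S (\<lambda>\<phi>. w (C \<phi>))"
proof -
  obtain f where "f \<in> schwartz" and f: "\<forall>\<phi>\<in>schwartz. w \<phi> = (LINT x|lborel. f x * \<phi> x)"
    using assms(1) unfolding in_S_def by blast
  then obtain g where "g \<in> schwartz"
    and g: "\<forall>\<phi>\<in>schwartz. (LINT x|lborel. f x * C \<phi> x) = (LINT x|lborel. g x * \<phi> x)"
    using assms(2) unfolding schwartz_transposable_def by blast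
  show ?thesis
    unfolding in_S_def using \<open>g \<in> schwartz\<close> f g assms(3) by auto
qed

locale schwartz_conj =
  fixes A B L L' :: "(real \<Rightarrow> complex) \<Rightarrow> real \<Rightarrow> complex"
  assumes iso: "schwartz_iso A B"
    and L: "\<And>\<phi>. \<phi> \<in> schwartz \<Longrightarrow> L \<phi> \<in> schwartz"
    and L': "\<And>\<phi>. \<phi> \<in> schwartz \<Longrightarrow> L' \<phi> \<in> schwartz"
    and intertwine: "\<And>\<phi>. \<phi> \<in> schwartz \<Longrightarrow> A (L' \<phi>) = L (A \<phi>)"
begin

lemma
  shows A: "\<phi> \<in> schwartz \<Longrightarrow> A \<phi> \<in> schwartz" and B: "\<phi> \<in> schwartz \<Longrightarrow> B \<phi> \<in> schwartz"
    and AB: "\<phi> \<in> schwartz \<Longrightarrow> A (B \<phi>) = \<phi>" and BA: "\<phi> \<in> schwartz \<Longrightarrow> B (A \<phi>) = \<phi>"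
    and transposable: "schwartz_transposable A" "schwartz_transposable B"
    and tempered_B: "tempered u \<Longrightarrow> tempered (\<lambda>\<phi>. u (B \<phi>))"
  using iso tempered_comp[of u B] unfolding schwartz_iso_def by (auto simp: schwartz_mapD)

lemma intertwine_inverse: "\<psi> \<in> schwartz \<Longrightarrow> B (L \<psi>) = L' (B \<psi>)"
  by (metis AB B BA L' intertwine)

lemma sym: "schwartz_conj B A L' L"
  using iso L L' intertwine_inverse by unfold_locales (auto simp: schwartz_iso_sym)

lemma kernel_trivial_transfer:
  assumes "kernel_trivial (dual_op L)"
  shows "kernel_trivial (dual_op L')"
  unfolding kernel_trivial_def dual_op_def
proof (intro allI impI ballI)
  fix w \<phi> assume w: "tempered w" and zero: "\<forall>\<phi>\<in>schwartz. w (L' \<phi>) = 0" and \<phi>: "\<phi> \<in> schwartz"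
  have "\<forall>\<psi>\<in>schwartz. w (B (L \<psi>)) = 0"
    using zero by (simp add: intertwine_inverse B)
  then have "\<forall>\<psi>\<in>schwartz. w (B \<psi>) = 0"
    using assms tempered_B[OF w] unfolding kernel_trivial_def dual_op_def by blast
  then show "w \<phi> = 0" using A[OF \<phi>] BA[OF \<phi>] by metis
qed

lemma globally_regular_transfer:
  assumes "globally_regular (dual_op L)"
  shows "globally_regular (dual_op L')"
  unfolding globally_regular_def
proof (intro allI impI)
  fix w assume w: "tempered w" and "in_S (dual_op L' w)"
  have "in_S (\<lambda>\<psi>. w (L' (B \<psi>)))"
    using in_S_comp[OF \<open>in_S (dual_op L' w)\<close>[unfolded dual_op_def] transposable(2) B] .
  then have "in_S (dual_op L (\<lambda>\<psi>. w (B \<psi>)))"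
    unfolding dual_op_def by (rule in_S_cong) (simp add: intertwine_inverse)
  then have "in_S (\<lambda>\<psi>. w (B \<psi>))"
    using assms tempered_B[OF w] unfolding globally_regular_def by blast
  then have "in_S (\<lambda>\<phi>. w (B (A \<phi>)))"
    by (rule in_S_comp[OF _ transposable(1) A])
  then show "in_S w"
    by (rule in_S_cong) (simp add: BA)
qed

lemma equally_regular: "equally_regular L L'"
  unfolding equally_regular_def
  using kernel_trivial_transfer globally_regular_transfer
    schwartz_conj.kernel_trivial_transfer[OF sym] schwartz_conj.globally_regular_transfer[OF sym]
  by blast

end

section \<open>Second order operators and their Weyl symbols\<close>

lemma Mop_funpow: "(Mop ^^ j) v = (\<lambda>\<phi>. v (\<lambda>x. complex_of_real x ^ j * \<phi> x))"
  by (induction j arbitrary: v) (simp_all add: Mop_def mult.assoc mult.left_commute)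

lemma Dop_funpow: "(Dop ^^ k) u = (\<lambda>\<phi>. \<i> ^ k * u (dn k \<phi>))"
proof (induction k)
  case (Suc k)
  have "dn k (\<lambda>x. vector_derivative \<phi> (at x)) = dn (Suc k) \<phi>" for \<phi>
  proof -
    have "(\<lambda>x. vector_derivative \<phi> (at x)) = dn 1 \<phi>" by (simp add: dn.simps)
    then show ?thesis by (simp only: dn_Suc_dn1[of k])
  qed
  then show ?case using Suc by (simp add: Dop_def mult.assoc)
qed simp

lemma sum_order2: "(\<Sum>k\<le>2::nat. \<Sum>j\<le>2 - k. f k j) = f 0 0 + f 0 1 + f 0 2 + f 1 0 + f 1 1 + f 2 0"
  by (simp add: numeral_2_eq_2 atMost_Suc add_ac)

lemma linear_functional_sum_order2:
  assumes "linear_functional u" "\<And>k j. f k j \<in> schwartz"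
  shows "u (\<lambda>x. \<Sum>k\<le>2::nat. \<Sum>j\<le>2 - k. a k j * f k j x) = (\<Sum>k\<le>2. \<Sum>j\<le>2 - k. a k j * u (f k j))"
proof -
  have inner: "(\<lambda>x. \<Sum>j\<le>2 - k. a k j * f k j x) \<in> schwartz" for k
    by (intro schwartz_sum schwartz_cmult assms(2)) auto
  have "u (\<lambda>x. \<Sum>k\<le>2::nat. \<Sum>j\<le>2 - k. a k j * f k j x) = (\<Sum>k\<le>2. u (\<lambda>x. \<Sum>j\<le>2 - k. a k j * f k j x))"
    by (rule linear_functional_sum[OF assms(1)]) (auto intro: inner)
  also have "\<dots> = (\<Sum>k\<le>2. \<Sum>j\<le>2 - k. a k j * u (f k j))"
    by (intro sum.cong refl)
       (simp add: linear_functional_sum[OF assms(1)] linear_functional_cmult[OF assms(1)] schwartz_cmult assms(2))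
  finally show ?thesis .
qed

text \<open>\<open>op_of c u \<phi> = u (test_op c \<phi>)\<close>: \<open>test_op c\<close> is the transpose of \<open>op_of c\<close>, acting on test
  functions.\<close>

definition test_op :: "(nat \<Rightarrow> nat \<Rightarrow> complex) \<Rightarrow> (real \<Rightarrow> complex) \<Rightarrow> real \<Rightarrow> complex" where
  "test_op c \<phi> = (\<lambda>x. \<Sum>k\<le>2. \<Sum>j\<le>2 - k. c k j * \<i> ^ k * dn k (\<lambda>x. complex_of_real x ^ j * \<phi> x) x)"

lemma test_op_explicit:
  assumes "\<phi> \<in> schwartz"
  shows "test_op c \<phi> = (\<lambda>x. c 0 0 * \<phi> x + c 0 1 * (complex_of_real x * \<phi> x)
      + c 0 2 * (complex_of_real x ^ 2 * \<phi> x) + \<i> * c 1 0 * dn 1 \<phi> x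
      + \<i> * c 1 1 * (\<phi> x + complex_of_real x * dn 1 \<phi> x) - c 2 0 * dn 2 \<phi> x)"
  unfolding test_op_def sum_order2 using dn_xmult[OF assms, of 1]
  by (simp add: algebra_simps power2_eq_square)

lemma test_op_schwartz: "\<phi> \<in> schwartz \<Longrightarrow> test_op c \<phi> \<in> schwartz"
  unfolding test_op_def by (intro schwartz_sum schwartz_cmult schwartz_dn schwartz_xpow) auto

lemma op_of_eq_test_op:
  assumes "tempered u" "\<phi> \<in> schwartz"
  shows "op_of c u \<phi> = u (test_op c \<phi>)"
proof -
  have "\<And>k j. dn k (\<lambda>x. complex_of_real x ^ j * \<phi> x) \<in> schwartz"
    using assms(2) by (intro schwartz_dn schwartz_xpow)
  from linear_functional_sum_order2[OF tempered_linear[OF assms(1)] this, of "\<lambda>k j. c k j * \<i> ^ k"]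
  show ?thesis
    unfolding test_op_def by (simp add: op_of_def Mop_funpow Dop_funpow mult_ac)
qed

text \<open>The coefficients of the transpose, brought into the order \<open>M\<^sup>j D\<^sup>k\<close> using \<open>D M = M D - \<i>\<close>.\<close>

definition transpose_coeffs :: "(nat \<Rightarrow> nat \<Rightarrow> complex) \<Rightarrow> nat \<Rightarrow> nat \<Rightarrow> complex" where
  "transpose_coeffs c = (\<lambda>k j. if k = 0 \<and> j = 0 then c 0 0 + \<i> * c 1 1 else if k = 1 \<and> j = 0 then - c 1 0
      else if k = 1 \<and> j = 1 then - c 1 1 else c k j)"

lemma op_transpose_eq_test_op:
  assumes "tempered u" "\<phi> \<in> schwartz"
  shows "op_transpose c u \<phi> = u (test_op (transpose_coeffs c) \<phi>)"
proof -
  have "\<And>k j. (\<lambda>x. complex_of_real x ^ j * dn k \<phi> x) \<in> schwartz"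
    using assms(2) by (intro schwartz_dn schwartz_xpow)
  from linear_functional_sum_order2[of u "\<lambda>k j x. complex_of_real x ^ j * dn k \<phi> x"
      "\<lambda>k j. (- 1) ^ k * c k j * \<i> ^ k", OF tempered_linear[OF assms(1)] this]
  have "op_transpose c u \<phi> = u (\<lambda>x. \<Sum>k\<le>2. \<Sum>j\<le>2 - k.
      (- 1) ^ k * c k j * \<i> ^ k * (complex_of_real x ^ j * dn k \<phi> x))"
    by (simp add: op_transpose_def Mop_funpow Dop_funpow mult_ac)
  also have "(\<lambda>x. \<Sum>k\<le>2. \<Sum>j\<le>2 - k. (- 1) ^ k * c k j * \<i> ^ k * (complex_of_real x ^ j * dn k \<phi> x))
      = test_op (transpose_coeffs c) \<phi>"
    unfolding test_op_explicit[OF assms(2)] sum_order2 transpose_coeffs_def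
    by (simp add: algebra_simps power2_eq_square)
  finally show ?thesis .
qed

lemma weyl_symbol_transpose_coeffs: "weyl_symbol (transpose_coeffs c) x \<xi> = weyl_symbol c x (- \<xi>)"
  unfolding weyl_symbol_def transpose_coeffs_def by (simp add: algebra_simps)

lemma coeffs_from_weyl_symbol:
  fixes c :: "nat \<Rightarrow> nat \<Rightarrow> complex"
  defines "w \<equiv> weyl_symbol c"
  shows "c 2 0 = (w 0 1 + w 0 (- 1)) / 2 - w 0 0" "c 1 0 = (w 0 1 - w 0 (- 1)) / 2"
    "c 0 2 = (w 1 0 + w (- 1) 0) / 2 - w 0 0" "c 0 1 = (w 1 0 - w (- 1) 0) / 2"
    "c 1 1 = w 1 1 - w 0 1 - w 1 0 + w 0 0" "c 0 0 = w 0 0 - \<i> / 2 * c 1 1"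
  unfolding w_def weyl_symbol_def by (simp_all add: field_simps)

lemma test_op_weyl_symbol_cong:
  assumes "\<And>x \<xi>. weyl_symbol c x \<xi> = weyl_symbol d x \<xi>"
  shows "test_op c = test_op d"
proof -
  have "weyl_symbol c = weyl_symbol d" using assms by (intro ext)
  then have "c 2 0 = d 2 0" "c 1 0 = d 1 0" "c 0 2 = d 0 2" "c 0 1 = d 0 1" "c 1 1 = d 1 1" "c 0 0 = d 0 0"
    using coeffs_from_weyl_symbol[of c] coeffs_from_weyl_symbol[of d] by (simp_all only:)
  then show ?thesis
    unfolding test_op_def sum_order2 by simp
qed

text \<open>The coefficients of \<open>p \<circ> \<chi>\<close> for \<open>\<chi> = (a b; c d)\<close>; the constant term is corrected because the
  Weyl symbol of \<open>M D\<close> carries the constant \<open>\<i>/2\<close>.\<close>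

definition comp_coeffs :: "(nat \<Rightarrow> nat \<Rightarrow> complex) \<Rightarrow> real \<Rightarrow> real \<Rightarrow> real \<Rightarrow> real \<Rightarrow> nat \<Rightarrow> nat \<Rightarrow> complex" where
  "comp_coeffs p a b c d = (let
      n20 = p 2 0 * d\<^sup>2 + p 1 1 * (b * d) + p 0 2 * b\<^sup>2;
      n11 = p 2 0 * (2 * c * d) + p 1 1 * (a * d + b * c) + p 0 2 * (2 * a * b);
      n02 = p 2 0 * c\<^sup>2 + p 1 1 * (a * c) + p 0 2 * a\<^sup>2;
      n10 = p 1 0 * d + p 0 1 * b;
      n01 = p 1 0 * c + p 0 1 * a;
      n00 = p 0 0 + \<i> / 2 * p 1 1 - \<i> / 2 * n11
    in (\<lambda>k j. if k = 2 \<and> j = 0 then n20 else if k = 1 \<and> j = 1 then n11 else if k = 0 \<and> j = 2 then n02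
        else if k = 1 \<and> j = 0 then n10 else if k = 0 \<and> j = 1 then n01 else n00))"

lemma weyl_symbol_comp_coeffs:
  "weyl_symbol (comp_coeffs p a b c d) x \<xi> = weyl_symbol p (a * x + b * \<xi>) (c * x + d * \<xi>)"
  unfolding weyl_symbol_def comp_coeffs_def Let_def
  by (simp add: power2_eq_square) algebra

section \<open>Invariance under linear symplectic changes of variables\<close>

lemma test_op_intertwine:
  assumes A: "schwartz_linear A"
    and dA: "\<And>\<phi>. \<phi> \<in> schwartz \<Longrightarrow> dn 1 (A \<phi>) = A (D \<phi>)" and D: "schwartz_map D"
    and xA: "\<And>\<phi>. \<phi> \<in> schwartz \<Longrightarrow> (\<lambda>x. complex_of_real x * A \<phi> x) = A (E \<phi>)" and E: "schwartz_map E"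
    and conj: "(\<lambda>x. \<Sum>k\<le>2. \<Sum>j\<le>2 - k. p k j * \<i> ^ k * (D ^^ k) ((E ^^ j) \<phi>) x) = test_op q \<phi>"
    and \<phi>: "\<phi> \<in> schwartz"
  shows "A (test_op q \<phi>) = test_op p (A \<phi>)"
proof -
  have E\<phi>: "(E ^^ j) \<phi> \<in> schwartz" for j
    using schwartz_map_funpow[OF E] \<phi> by (rule schwartz_mapD)
  have mem: "(D ^^ k) ((E ^^ j) \<phi>) \<in> schwartz" for k j
    using schwartz_map_funpow[OF D] E\<phi> by (rule schwartz_mapD)
  have "test_op p (A \<phi>) = (\<lambda>x. \<Sum>k\<le>2. \<Sum>j\<le>2 - k. p k j * \<i> ^ k * A ((D ^^ k) ((E ^^ j) \<phi>)) x)"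
    unfolding test_op_def
    using xpow_intertwine[where A = A and E = E] dn_intertwine[where A = A and D = D] dA D xA E E\<phi> \<phi>
    by simp
  also have "\<dots> = A (\<lambda>x. \<Sum>k\<le>2. \<Sum>j\<le>2 - k. p k j * \<i> ^ k * (D ^^ k) ((E ^^ j) \<phi>) x)"
  proof
    fix x
    show "(\<Sum>k\<le>2. \<Sum>j\<le>2 - k. p k j * \<i> ^ k * A ((D ^^ k) ((E ^^ j) \<phi>)) x)
        = A (\<lambda>x. \<Sum>k\<le>2. \<Sum>j\<le>2 - k. p k j * \<i> ^ k * (D ^^ k) ((E ^^ j) \<phi>) x) x"
      using linear_functional_sum_order2[of "\<lambda>\<psi>. A \<psi> x" "\<lambda>k j. (D ^^ k) ((E ^^ j) \<phi>)"
          "\<lambda>k j. p k j * \<i> ^ k"] A mem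
      unfolding schwartz_linear_def by simp
  qed
  finally show ?thesis by (simp add: conj)
qed

definition sympl_invariant :: "real \<Rightarrow> real \<Rightarrow> real \<Rightarrow> real \<Rightarrow> bool" where
  "sympl_invariant a b c d \<longleftrightarrow>
     (\<forall>p q. (\<forall>x \<xi>. weyl_symbol q x \<xi> = weyl_symbol p (a * x + b * \<xi>) (c * x + d * \<xi>))
       \<longrightarrow> equally_regular (test_op p) (test_op q))"

text \<open>\<open>A\<close> (a metaplectic operator) turns \<open>\<partial>\<close> and multiplication by \<open>x\<close> into \<open>D\<close> and \<open>E\<close>; \<open>conj\<close> says
  that substituting them into the operator with coefficients \<open>p\<close> gives the one with symbol \<open>p \<circ> \<chi>\<close>.\<close>

lemma sympl_invariantI:
  assumes iso: "schwartz_iso A B"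
    and dA: "\<And>\<phi>. \<phi> \<in> schwartz \<Longrightarrow> dn 1 (A \<phi>) = A (D \<phi>)" and D: "schwartz_map D"
    and xA: "\<And>\<phi>. \<phi> \<in> schwartz \<Longrightarrow> (\<lambda>x. complex_of_real x * A \<phi> x) = A (E \<phi>)" and E: "schwartz_map E"
    and conj: "\<And>p \<phi>. \<phi> \<in> schwartz \<Longrightarrow>
      (\<lambda>x. \<Sum>k\<le>2. \<Sum>j\<le>2 - k. p k j * \<i> ^ k * (D ^^ k) ((E ^^ j) \<phi>) x) = test_op (comp_coeffs p a b c d) \<phi>"
  shows "sympl_invariant a b c d"
  unfolding sympl_invariant_def
proof (intro allI impI)
  fix p q
  assume "\<forall>x \<xi>. weyl_symbol q x \<xi> = weyl_symbol p (a * x + b * \<xi>) (c * x + d * \<xi>)"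
  then have "test_op q = test_op (comp_coeffs p a b c d)"
    by (intro test_op_weyl_symbol_cong) (simp add: weyl_symbol_comp_coeffs)
  moreover have "schwartz_conj A B (test_op p) (test_op (comp_coeffs p a b c d))"
  proof
    show "A (test_op (comp_coeffs p a b c d) \<phi>) = test_op p (A \<phi>)" if "\<phi> \<in> schwartz" for \<phi>
      using iso unfolding schwartz_iso_def
      by (intro test_op_intertwine[OF _ dA D xA E conj[OF that] that]) auto
  qed (use iso in \<open>auto simp: test_op_schwartz\<close>)
  ultimately show "equally_regular (test_op p) (test_op q)"
    using schwartz_conj.equally_regular by metis
qed

lemma sympl_invariant_mult:
  assumes "sympl_invariant a b c d" "sympl_invariant a' b' c' d'"
  shows "sympl_invariant (a * a' + b * c') (a * b' + b * d') (c * a' + d * c') (c * b' + d * d')"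
  unfolding sympl_invariant_def
proof (intro allI impI)
  fix p q
  assume h: "\<forall>x \<xi>. weyl_symbol q x \<xi> = weyl_symbol p ((a * a' + b * c') * x + (a * b' + b * d') * \<xi>)
        ((c * a' + d * c') * x + (c * b' + d * d') * \<xi>)"
  define p' where "p' = comp_coeffs p a b c d"
  have "equally_regular (test_op p) (test_op p')"
    using assms(1) unfolding sympl_invariant_def p'_def by (simp add: weyl_symbol_comp_coeffs)
  moreover have "weyl_symbol q x \<xi> = weyl_symbol p' (a' * x + b' * \<xi>) (c' * x + d' * \<xi>)" for x \<xi>
    unfolding p'_def weyl_symbol_comp_coeffs h[rule_format] by (simp add: algebra_simps)
  then have "equally_regular (test_op p') (test_op q)"
    using assms(2) unfolding sympl_invariant_def by blast
  ultimately show "equally_regular (test_op p) (test_op q)"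
    unfolding equally_regular_def by blast
qed

text \<open>\<open>SL(2, \<real>)\<close> is generated by the diagonal matrices, the lower shears and the rotation by
  \<open>\<pi>/2\<close>: a matrix with \<open>m\<^sub>1\<^sub>2 \<noteq> 0\<close> is (lower triangular) \<open>\<cdot> J \<cdot> diag(-1, -1) \<cdot>\<close> (shear).\<close>

lemma SL2_induct:
  fixes P :: "real \<Rightarrow> real \<Rightarrow> real \<Rightarrow> real \<Rightarrow> bool"
  assumes mult: "\<And>a b c d a' b' c' d'. P a b c d \<Longrightarrow> P a' b' c' d' \<Longrightarrow>
      P (a * a' + b * c') (a * b' + b * d') (c * a' + d * c') (c * b' + d * d')"
    and diag: "\<And>t. t \<noteq> 0 \<Longrightarrow> P (1 / t) 0 0 t"
    and shear: "\<And>s. P 1 0 s 1"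
    and rot: "P 0 (- 1) 1 0"
    and det: "m11 * m22 - m12 * m21 = 1"
  shows "P m11 m12 m21 m22"
proof -
  have lower: "P a 0 c d" if "a * d = 1" for a c d
  proof -
    have "d \<noteq> 0" using that by auto
    have "P (1 / d * 1 + 0 * (c / d)) (1 / d * 0 + 0 * 1) (0 * 1 + d * (c / d)) (0 * 0 + d * 1)"
      by (rule mult[OF diag[OF \<open>d \<noteq> 0\<close>] shear])
    moreover have "a = 1 / d" using that \<open>d \<noteq> 0\<close> by (simp add: field_simps)
    ultimately show ?thesis using \<open>d \<noteq> 0\<close> by simp
  qed
  show ?thesis
  proof (cases "m12 = 0")
    case True
    then show ?thesis using lower det by simp
  next
    case False
    define t where "t = - m11 / m12"
    have "P m12 0 m22 (- (m21 + m22 * t))"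
      by (rule lower) (use False det in \<open>simp add: t_def field_simps\<close>)
    from mult[OF mult[OF this rot] diag[of "- 1"]]
    have "P 0 m12 (m21 + m22 * t) m22" by (simp add: add.commute)
    from mult[OF this shear[of "- t"]] show ?thesis
      using False by (simp add: t_def field_simps)
  qed
qed

text \<open>Rules for computing \<open>D\<^sup>k (E\<^sup>j \<phi>)\<close> for the concrete generators below. Since \<open>One_nat_def\<close> is a
  simp rule, they are used with \<open>del: One_nat_def\<close>, which keeps \<open>dn 1\<close> intact.\<close>

lemma dn1_xmult: "\<phi> \<in> schwartz \<Longrightarrow> dn 1 (\<lambda>x. complex_of_real x * \<phi> x) = (\<lambda>x. \<phi> x + complex_of_real x * dn 1 \<phi> x)"
  using dn_xmult[of \<phi> 1] by (simp add: algebra_simps)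

lemma dn1_dn1: "dn 1 (dn 1 \<phi>) = dn 2 \<phi>"
  using dn_Suc_dn1[of 1 \<phi>] by (simp add: numeral_2_eq_2)

lemma funpow_one: "(f :: 'a \<Rightarrow> 'a) ^^ 1 = f"
  by simp

lemma funpow_two: "(f :: 'a \<Rightarrow> 'a) ^^ 2 = f \<circ> f"
  by (simp add: numeral_2_eq_2)

lemmas dn1_simps = dn_cmult dn1_xmult dn_divide dn1_dn1 dn_add dn_diff dn_uminus
  schwartz_cmult schwartz_xmult schwartz_divide schwartz_dn1 schwartz_add schwartz_diff schwartz_uminus

section \<open>Dilations\<close>

definition dilate :: "real \<Rightarrow> (real \<Rightarrow> complex) \<Rightarrow> real \<Rightarrow> complex" where
  "dilate c \<phi> = (\<lambda>x. \<phi> (c * x))"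

lemma has_vector_derivative_dilate:
  assumes "\<phi> \<in> schwartz"
  shows "(dilate c \<phi> has_vector_derivative complex_of_real c * dn 1 \<phi> (c * x)) (at x)"
proof -
  have "((\<lambda>x. c * x) has_vector_derivative c) (at x)"
    using has_vector_derivative_mult_right[OF has_vector_derivative_id, of c "at x"] by simp
  from vector_diff_chain_at[OF this schwartz_deriv0[OF assms]]
  show ?thesis by (simp add: dilate_def o_def scaleR_conv_of_real)
qed

lemma dn1_dilate: "\<phi> \<in> schwartz \<Longrightarrow> dn 1 (dilate c \<phi>) = dilate c (\<lambda>x. complex_of_real c * dn 1 \<phi> x)"
  using has_vector_derivative_dilate by (intro dn1_eqI) (simp add: dilate_def)

lemma xmult_dilate:
  "c \<noteq> 0 \<Longrightarrow> (\<lambda>x. complex_of_real x * dilate c \<phi> x)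
    = dilate c (\<lambda>x. complex_of_real (1 / c) * (complex_of_real x * \<phi> x))"
  by (auto simp: dilate_def)

lemma schwartz_map_dilate:
  assumes "c \<noteq> 0"
  shows "schwartz_map (dilate c)"
proof (rule schwartz_map_transfer[where D = "\<lambda>\<phi> x. complex_of_real c * dn 1 \<phi> x"
      and E = "\<lambda>\<phi> x. complex_of_real (1 / c) * (complex_of_real x * \<phi> x)"])
  show "(dilate c \<phi> has_vector_derivative dilate c (\<lambda>x. complex_of_real c * dn 1 \<phi> x) x) (at x)"
    if "\<phi> \<in> schwartz" for \<phi> x
    using has_vector_derivative_dilate[OF that] by (simp add: dilate_def)
  show "(\<lambda>x. complex_of_real x * dilate c \<phi> x)
      = dilate c (\<lambda>x. complex_of_real (1 / c) * (complex_of_real x * \<phi> x))" for \<phi>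
    by (rule xmult_dilate[OF assms])
  show "schwartz_map (\<lambda>\<phi> x. complex_of_real c * dn 1 \<phi> x)"
    by (rule schwartz_map_scale[OF schwartz_map_dn1])
  show "schwartz_map (\<lambda>\<phi> x. complex_of_real (1 / c) * (complex_of_real x * \<phi> x))"
    by (rule schwartz_map_scale[OF schwartz_map_xmult])
  show "seminorm_bounded (dilate c)"
    using snorm_upper[of _ "c * _" 0 0]
    by (intro seminorm_boundedI[OF snorm_dominated_snorm]) (simp add: dilate_def)
qed

lemma schwartz_transposable_dilate:
  assumes "c \<noteq> 0"
  shows "schwartz_transposable (dilate c)"
  unfolding schwartz_transposable_def
proof (intro ballI)
  fix f assume "f \<in> schwartz"
  define g where "g = (\<lambda>y. complex_of_real (1 / \<bar>c\<bar>) * dilate (1 / c) f y)"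
  have "g \<in> schwartz"
    unfolding g_def using assms \<open>f \<in> schwartz\<close>
    by (intro schwartz_cmult schwartz_mapD[OF schwartz_map_dilate]) auto
  moreover have "(LINT x|lborel. f x * dilate c \<phi> x) = (LINT x|lborel. g x * \<phi> x)" for \<phi>
  proof -
    have "(LINT y|lborel. f (1 / c * y) * \<phi> y) = \<bar>c\<bar> *\<^sub>R (LINT x|lborel. f x * dilate c \<phi> x)"
      using lborel_integral_real_affine[OF assms, of "\<lambda>y. f (1 / c * y) * \<phi> y" 0] assms
      by (simp add: dilate_def)
    then show ?thesis
      using assms unfolding g_def dilate_def by (simp add: mult.assoc scaleR_conv_of_real)
  qed
  ultimately show "\<exists>g\<in>schwartz. \<forall>\<phi>\<in>schwartz. (LINT x|lborel. f x * dilate c \<phi> x) = (LINT x|lborel. g x * \<phi> x)"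
    by blast
qed

lemma schwartz_iso_dilate:
  assumes "c \<noteq> 0"
  shows "schwartz_iso (dilate c) (dilate (1 / c))"
  using assms unfolding schwartz_iso_def
  by (simp add: schwartz_map_dilate schwartz_transposable_dilate schwartz_linear_def
      linear_functional_def dilate_def)

lemma sympl_invariant_diag:
  assumes "c \<noteq> 0"
  shows "sympl_invariant (1 / c) 0 0 c"
proof (rule sympl_invariantI[OF schwartz_iso_dilate[OF assms] dn1_dilate
      schwartz_map_scale[OF schwartz_map_dn1] xmult_dilate[OF assms] schwartz_map_scale[OF schwartz_map_xmult]])
  fix p :: "nat \<Rightarrow> nat \<Rightarrow> complex" and \<phi> assume "\<phi> \<in> schwartz"
  then show "(\<lambda>x. \<Sum>k\<le>2. \<Sum>j\<le>2 - k. p k j * \<i> ^ k *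
      ((\<lambda>\<phi> x. complex_of_real c * dn 1 \<phi> x) ^^ k)
        (((\<lambda>\<phi> x. complex_of_real (1 / c) * (complex_of_real x * \<phi> x)) ^^ j) \<phi>) x)
      = test_op (comp_coeffs p (1 / c) 0 0 c) \<phi>"
    unfolding sum_order2 test_op_explicit[OF \<open>\<phi> \<in> schwartz\<close>] comp_coeffs_def Let_def
    using assms
    by (simp add: funpow_one funpow_two dn1_simps del: One_nat_def) (simp add: field_simps power2_eq_square)
qed

section \<open>Multiplication by chirps\<close>

lemma has_vector_derivative_iexp_comp:
  assumes "(f has_real_derivative f') (at x)"
  shows "((\<lambda>x. iexp (f x)) has_vector_derivative \<i> * complex_of_real f' * iexp (f x)) (at x)"
proof -
  have "(f has_vector_derivative f') (at x)"
    using assms by (simp add: has_real_derivative_iff_has_vector_derivative)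
  from vector_diff_chain_at[OF this has_vector_derivative_iexp]
  show ?thesis by (simp add: o_def scaleR_conv_of_real algebra_simps)
qed

definition chirp :: "real \<Rightarrow> (real \<Rightarrow> complex) \<Rightarrow> real \<Rightarrow> complex" where
  "chirp s \<phi> = (\<lambda>x. iexp (- (s * x\<^sup>2) / 2) * \<phi> x)"

lemma has_vector_derivative_chirp:
  assumes "\<phi> \<in> schwartz"
  shows "(chirp s \<phi> has_vector_derivative
      chirp s (\<lambda>x. dn 1 \<phi> x - \<i> * complex_of_real s * (complex_of_real x * \<phi> x)) x) (at x)"
proof -
  have "((\<lambda>x. - (s * x\<^sup>2) / 2) has_real_derivative - (s * x)) (at x)"
    by (auto intro!: derivative_eq_intros)
  from has_vector_derivative_mult[OF has_vector_derivative_iexp_comp[OF this] schwartz_deriv0[OF assms]]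
  show ?thesis
    unfolding chirp_def by (simp add: algebra_simps)
qed

lemma dn1_chirp:
  "\<phi> \<in> schwartz \<Longrightarrow>
    dn 1 (chirp s \<phi>) = chirp s (\<lambda>x. dn 1 \<phi> x - \<i> * complex_of_real s * (complex_of_real x * \<phi> x))"
  by (intro dn1_eqI has_vector_derivative_chirp)

lemma xmult_chirp: "(\<lambda>x. complex_of_real x * chirp s \<phi> x) = chirp s (\<lambda>x. complex_of_real x * \<phi> x)"
  by (auto simp: chirp_def)

lemma schwartz_map_chirp_deriv:
  "schwartz_map (\<lambda>\<phi> x. dn 1 \<phi> x - \<i> * complex_of_real s * (complex_of_real x * \<phi> x))"
  using schwartz_map_lin[OF schwartz_map_dn1 schwartz_map_xmult, of 1 "- \<i> * complex_of_real s"]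
  by (simp add: algebra_simps)

lemma schwartz_map_chirp: "schwartz_map (chirp s)"
proof (rule schwartz_map_transfer[OF has_vector_derivative_chirp xmult_chirp schwartz_map_chirp_deriv
      schwartz_map_xmult])
  show "seminorm_bounded (chirp s)"
    using snorm_upper[of _ _ 0 0]
    by (intro seminorm_boundedI[OF snorm_dominated_snorm]) (simp add: chirp_def norm_mult)
qed

lemma chirp_chirp_uminus: "chirp s (chirp (- s) \<phi>) = \<phi>"
proof -
  have "iexp (- (s * x\<^sup>2) / 2) * iexp (- (- s * x\<^sup>2) / 2) = 1" for x
    by (simp add: exp_add[symmetric] algebra_simps)
  then show ?thesis by (simp add: chirp_def mult.assoc[symmetric])
qed

lemma schwartz_transposable_chirp: "schwartz_transposable (chirp s)"
  unfolding schwartz_transposable_def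
proof (intro ballI)
  fix f assume "f \<in> schwartz"
  then have "chirp s f \<in> schwartz" by (rule schwartz_mapD[OF schwartz_map_chirp])
  moreover have "(LINT x|lborel. f x * chirp s \<phi> x) = (LINT x|lborel. chirp s f x * \<phi> x)" for \<phi>
    by (simp add: chirp_def algebra_simps)
  ultimately show "\<exists>g\<in>schwartz. \<forall>\<phi>\<in>schwartz. (LINT x|lborel. f x * chirp s \<phi> x) = (LINT x|lborel. g x * \<phi> x)"
    by blast
qed

lemma schwartz_iso_chirp: "schwartz_iso (chirp s) (chirp (- s))"
  unfolding schwartz_iso_def
  using chirp_chirp_uminus[of s] chirp_chirp_uminus[of "- s"]
  by (simp add: schwartz_map_chirp schwartz_transposable_chirp schwartz_linear_def
      linear_functional_def chirp_def algebra_simps)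

lemma sympl_invariant_shear: "sympl_invariant 1 0 s 1"
proof (rule sympl_invariantI[OF schwartz_iso_chirp dn1_chirp schwartz_map_chirp_deriv xmult_chirp
      schwartz_map_xmult])
  fix p :: "nat \<Rightarrow> nat \<Rightarrow> complex" and \<phi> assume "\<phi> \<in> schwartz"
  then show "(\<lambda>x. \<Sum>k\<le>2. \<Sum>j\<le>2 - k. p k j * \<i> ^ k *
      ((\<lambda>\<phi> x. dn 1 \<phi> x - \<i> * complex_of_real s * (complex_of_real x * \<phi> x)) ^^ k)
        (((\<lambda>\<phi> x. complex_of_real x * \<phi> x) ^^ j) \<phi>) x)
      = test_op (comp_coeffs p 1 0 s 1) \<phi>"
    unfolding sum_order2 test_op_explicit[OF \<open>\<phi> \<in> schwartz\<close>] comp_coeffs_def Let_def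
    by (simp add: funpow_one funpow_two dn1_simps del: One_nat_def)
       (simp add: fun_eq_iff field_simps power2_eq_square)
qed

section \<open>The Fourier transform\<close>

definition fourier :: "(real \<Rightarrow> complex) \<Rightarrow> real \<Rightarrow> complex" where
  "fourier \<phi> = (\<lambda>\<xi>. CLINT x|lborel. iexp (- (x * \<xi>)) * \<phi> x)"

lemma iexp_add: "iexp (a + b) = iexp a * iexp b"
  by (simp add: exp_add[symmetric] algebra_simps)

lemma integrable_iexp_mult_schwartz:
  "f \<in> borel_measurable lborel \<Longrightarrow> \<phi> \<in> schwartz \<Longrightarrow> integrable lborel (\<lambda>x. iexp (f x) * \<phi> x)"
  by (rule integrable_bounded_mult_schwartz[where B = 1]) auto

lemma integrable_fourier_integrand: "\<phi> \<in> schwartz \<Longrightarrow> integrable lborel (\<lambda>x. iexp (- (x * \<xi>)) * \<phi> x)"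
  by (rule integrable_iexp_mult_schwartz) auto

lemma norm_fourier_le: "\<phi> \<in> schwartz \<Longrightarrow> norm (fourier \<phi> \<xi>) \<le> 2 * pi * snorms 2 \<phi>"
proof -
  assume \<phi>: "\<phi> \<in> schwartz"
  have "norm (fourier \<phi> \<xi>) \<le> (LINT x|lborel. norm (iexp (- (x * \<xi>)) * \<phi> x))"
    unfolding fourier_def by (rule integral_norm_bound)
  also have "\<dots> = (LINT x|lborel. norm (\<phi> x))" by (simp add: norm_mult)
  also have "\<dots> \<le> pi * (snorm 0 0 \<phi> + snorm 2 0 \<phi>)" by (rule schwartz_L1_bound[OF \<phi>])
  also have "\<dots> \<le> pi * (snorms 2 \<phi> + snorms 2 \<phi>)"
    by (intro mult_left_mono add_mono snorm_le_snorms \<phi>) auto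
  finally show ?thesis by simp
qed

lemma schwartz_linear_fourier: "schwartz_linear fourier"
  unfolding schwartz_linear_def linear_functional_def fourier_def
  using integrable_fourier_integrand by (simp add: distrib_left mult.left_commute)

lemma norm_iexp_sub_linear_le: "norm (iexp t - (1 + \<i> * t)) \<le> t\<^sup>2 / 2"
  using iexp_approx1[of t 1] by (simp add: power2_eq_square)

lemma fourier_taylor:
  assumes \<phi>: "\<phi> \<in> schwartz"
  defines "\<psi> \<equiv> \<lambda>x. - \<i> * (complex_of_real x * \<phi> x)"
  shows "norm (fourier \<phi> (\<xi> + h) - fourier \<phi> \<xi> - of_real h * fourier \<psi> \<xi>)
      \<le> h\<^sup>2 / 2 * (LINT x|lborel. norm (complex_of_real x ^ 2 * \<phi> x))"
proof -
  define R where "R x = iexp (- (x * (\<xi> + h))) * \<phi> x - iexp (- (x * \<xi>)) * \<phi> x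
    - of_real h * (iexp (- (x * \<xi>)) * \<psi> x)" for x
  have \<psi>: "\<psi> \<in> schwartz" unfolding \<psi>_def using \<phi> by (intro schwartz_cmult schwartz_xmult)
  note i = integrable_fourier_integrand[OF \<phi>, of "\<xi> + h"] integrable_fourier_integrand[OF \<phi>, of \<xi>]
    integrable_fourier_integrand[OF \<psi>, of \<xi>]
  have eq: "fourier \<phi> (\<xi> + h) - fourier \<phi> \<xi> - of_real h * fourier \<psi> \<xi> = (CLINT x|lborel. R x)"
    unfolding R_def fourier_def using i
    by (simp add: Bochner_Integration.integral_diff del: mult_minus_left)
  have bound: "norm (R x) \<le> h\<^sup>2 / 2 * norm (complex_of_real x ^ 2 * \<phi> x)" for x
  proof -
    have "R x = iexp (- (x * \<xi>)) * \<phi> x * (iexp (- (x * h)) - (1 + \<i> * (- (x * h))))"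
      using iexp_add[of "- (x * \<xi>)" "- (x * h)"] unfolding R_def \<psi>_def by (simp add: algebra_simps)
    then have "norm (R x) = norm (\<phi> x) * norm (iexp (- (x * h)) - (1 + \<i> * (- (x * h))))"
      by (simp add: norm_mult)
    also have "\<dots> \<le> norm (\<phi> x) * ((- (x * h))\<^sup>2 / 2)"
      by (intro mult_left_mono norm_iexp_sub_linear_le) auto
    also have "\<dots> = h\<^sup>2 / 2 * norm (complex_of_real x ^ 2 * \<phi> x)"
      by (simp add: norm_mult norm_power power_mult_distrib)
    finally show ?thesis .
  qed
  have "integrable lborel R"
    unfolding R_def using i by auto
  have "norm (CLINT x|lborel. R x) \<le> (LINT x|lborel. norm (R x))"
    by (rule integral_norm_bound)
  also have "\<dots> \<le> (LINT x|lborel. h\<^sup>2 / 2 * norm (complex_of_real x ^ 2 * \<phi> x))"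
    using \<open>integrable lborel R\<close> schwartz_integrable[OF schwartz_xpow[OF \<phi>, of 2]] bound
    by (intro integral_mono) auto
  finally have "norm (CLINT x|lborel. R x) \<le> h\<^sup>2 / 2 * (LINT x|lborel. norm (complex_of_real x ^ 2 * \<phi> x))"
    by simp
  then show ?thesis unfolding eq by simp
qed

lemma has_vector_derivative_quadratic_remainder:
  fixes F :: "real \<Rightarrow> 'a::real_normed_vector"
  assumes "\<And>y. norm (F y - F x - (y - x) *\<^sub>R G) \<le> K * (y - x)\<^sup>2"
  shows "(F has_vector_derivative G) (at x)"
  unfolding has_vector_derivative_def has_derivative_iff_norm
proof (intro conjI bounded_linear_scaleR_left)
  show "((\<lambda>y. norm (F y - F x - (y - x) *\<^sub>R G) / norm (y - x)) \<longlongrightarrow> 0) (at x)"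
  proof (rule Lim_null_comparison)
  have "norm (F y - F x - (y - x) *\<^sub>R G) / norm (y - x) \<le> K * \<bar>y - x\<bar>" for y
  proof (cases "y = x")
    case False
    have "norm (F y - F x - (y - x) *\<^sub>R G) / \<bar>y - x\<bar> \<le> K * \<bar>y - x\<bar>\<^sup>2 / \<bar>y - x\<bar>"
      using assms[of y] by (intro divide_right_mono) auto
    also have "\<dots> = K * \<bar>y - x\<bar>"
      using False by (simp add: power2_eq_square field_simps del: power2_abs)
    finally show ?thesis by simp
  qed simp
  then show "\<forall>\<^sub>F y in at x. norm (norm (F y - F x - (y - x) *\<^sub>R G) / norm (y - x)) \<le> K * \<bar>y - x\<bar>"
    by (intro always_eventually) simp
  have "((\<lambda>y. K * \<bar>y - x\<bar>) \<longlongrightarrow> K * \<bar>x - x\<bar>) (at x)"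
    by (intro tendsto_intros)
  then show "((\<lambda>y. K * \<bar>y - x\<bar>) \<longlongrightarrow> 0) (at x)" by simp
  qed
qed

lemma has_vector_derivative_fourier:
  "\<phi> \<in> schwartz \<Longrightarrow>
    (fourier \<phi> has_vector_derivative fourier (\<lambda>x. - \<i> * (complex_of_real x * \<phi> x)) \<xi>) (at \<xi>)"
  by (rule has_vector_derivative_quadratic_remainder[where
        K = "(LINT x|lborel. norm (complex_of_real x ^ 2 * \<phi> x)) / 2"])
     (use fourier_taylor[of \<phi> \<xi> "_ - \<xi>"] in \<open>simp add: scaleR_conv_of_real field_simps\<close>)

lemma schwartz_tendsto_zero:
  assumes "\<phi> \<in> schwartz" "\<And>x. norm (g x) = norm (\<phi> x)"
  shows "(g \<longlongrightarrow> 0) at_top" "(g \<longlongrightarrow> 0) at_bot"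
proof -
  define C where "C = snorm 0 0 \<phi> + snorm 2 0 \<phi>"
  have bound: "\<forall>\<^sub>F x in F. norm (g x) \<le> C * inverse (1 + x\<^sup>2)" for F
    using schwartz_decay[OF assms(1)] assms(2) unfolding C_def by (intro always_eventually) simp
  have "((\<lambda>x::real. C * inverse (1 + x\<^sup>2)) \<longlongrightarrow> 0) at_top" "((\<lambda>x::real. C * inverse (1 + x\<^sup>2)) \<longlongrightarrow> 0) at_bot"
    by real_asymp+
  then show "(g \<longlongrightarrow> 0) at_top" "(g \<longlongrightarrow> 0) at_bot"
    using Lim_null_comparison[OF bound] by blast+
qed

lemma integral_deriv_eq_zero:
  fixes g g' :: "real \<Rightarrow> complex"
  assumes "\<And>x. (g has_vector_derivative g' x) (at x)" "\<And>x. isCont g' x"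
    and "integrable lborel g'" "(g \<longlongrightarrow> 0) at_top" "(g \<longlongrightarrow> 0) at_bot"
  shows "(CLINT x|lborel. g' x) = 0"
proof -
  have "(LBINT x=-\<infinity>..\<infinity>. g' x) = 0 - 0"
  proof (rule interval_integral_FTC_integrable[where F = g])
    show "set_integrable lborel (einterval (- \<infinity>) \<infinity>) g'"
      unfolding set_integrable_def einterval_eq_UNIV using assms(3) by simp
    show "((g \<circ> real_of_ereal) \<longlongrightarrow> 0) (at_right (- \<infinity>))"
      using assms(5) by (simp add: ereal_tendsto_simps1)
    show "((g \<circ> real_of_ereal) \<longlongrightarrow> 0) (at_left \<infinity>)"
      using assms(4) by (simp add: ereal_tendsto_simps1)
  qed (use assms(1,2) in auto)
  then show ?thesis
    unfolding interval_lebesgue_integral_def set_lebesgue_integral_def einterval_eq_UNIV by simp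
qed

text \<open>Integration by parts: the boundary terms vanish because \<open>\<phi>\<close> decays.\<close>

lemma fourier_dn1:
  assumes "\<phi> \<in> schwartz"
  shows "fourier (dn 1 \<phi>) \<xi> = \<i> * complex_of_real \<xi> * fourier \<phi> \<xi>"
proof -
  define \<psi> where "\<psi> = (\<lambda>x. dn 1 \<phi> x - \<i> * complex_of_real \<xi> * \<phi> x)"
  have \<psi>: "\<psi> \<in> schwartz" unfolding \<psi>_def using assms by (intro schwartz_diff schwartz_cmult schwartz_dn1)
  have "fourier \<psi> \<xi> = fourier (dn 1 \<phi>) \<xi> - \<i> * complex_of_real \<xi> * fourier \<phi> \<xi>"
    unfolding \<psi>_def fourier_def
    using integrable_fourier_integrand[OF schwartz_dn1[OF assms], of \<xi>] integrable_fourier_integrand[OF assms, of \<xi>]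
    by (simp add: right_diff_distrib mult.left_commute del: mult_minus_left)
  moreover have "fourier \<psi> \<xi> = 0"
    unfolding fourier_def
  proof (rule integral_deriv_eq_zero)
    fix x
    have "((\<lambda>x. - (x * \<xi>)) has_real_derivative - \<xi>) (at x)"
      by (auto intro!: derivative_eq_intros)
    from has_vector_derivative_mult[OF has_vector_derivative_iexp_comp[OF this] schwartz_deriv0[OF assms]]
    show "((\<lambda>x. iexp (- (x * \<xi>)) * \<phi> x) has_vector_derivative iexp (- (x * \<xi>)) * \<psi> x) (at x)"
      unfolding \<psi>_def by (simp add: algebra_simps)
    show "isCont (\<lambda>x. iexp (- (x * \<xi>)) * \<psi> x) x"
      using schwartz_continuous[OF \<psi>, of x 0] by (intro continuous_intros) auto
  next
    show "integrable lborel (\<lambda>x. iexp (- (x * \<xi>)) * \<psi> x)" by (rule integrable_fourier_integrand[OF \<psi>])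
    show "((\<lambda>x. iexp (- (x * \<xi>)) * \<phi> x) \<longlongrightarrow> 0) at_top" "((\<lambda>x. iexp (- (x * \<xi>)) * \<phi> x) \<longlongrightarrow> 0) at_bot"
      by (rule schwartz_tendsto_zero[OF assms], simp add: norm_mult)+
  qed
  ultimately show ?thesis by simp
qed

lemma xmult_fourier:
  assumes "\<phi> \<in> schwartz"
  shows "(\<lambda>\<xi>. complex_of_real \<xi> * fourier \<phi> \<xi>) = fourier (\<lambda>x. - \<i> * dn 1 \<phi> x)"
proof -
  have "fourier (\<lambda>x. - \<i> * dn 1 \<phi> x) = (\<lambda>\<xi>. - \<i> * fourier (dn 1 \<phi>) \<xi>)"
    by (rule schwartz_linear_cmult[OF schwartz_linear_fourier schwartz_dn1[OF assms]])
  then show ?thesis by (simp add: fourier_dn1[OF assms] mult.assoc del: One_nat_def)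
qed

lemma schwartz_map_fourier: "schwartz_map fourier"
proof (rule schwartz_map_transfer[OF has_vector_derivative_fourier xmult_fourier
      schwartz_map_scale[OF schwartz_map_xmult] schwartz_map_scale[OF schwartz_map_dn1]])
  have "snorm_dominated (\<lambda>\<phi>. 2 * pi * snorms 2 \<phi>)"
    unfolding snorm_dominated_def by blast
  then show "seminorm_bounded fourier"
    by (rule seminorm_boundedI) (rule norm_fourier_le)
qed

lemma integral_iexp_kernel_swap:
  fixes u v :: "real \<Rightarrow> complex" and k :: "real \<Rightarrow> real \<Rightarrow> real"
  assumes u: "integrable lborel u" and v: "integrable lborel v"
    and k: "(\<lambda>p. k (fst p) (snd p)) \<in> borel_measurable (lborel \<Otimes>\<^sub>M lborel)"
      "\<And>x. k x \<in> borel_measurable lborel"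
  shows "(CLINT y|lborel. CLINT x|lborel. v y * (iexp (k x y) * u x))
    = (CLINT x|lborel. CLINT y|lborel. v y * (iexp (k x y) * u x))"
proof (rule lborel_pair.Fubini_integral)
  have [measurable]: "u \<in> borel_measurable lborel" "v \<in> borel_measurable lborel"
    using u v by auto
  note k(1)[measurable]
  show "integrable (lborel \<Otimes>\<^sub>M lborel) (\<lambda>(x, y). v y * (iexp (k x y) * u x))"
  proof (rule lborel_pair.Fubini_integrable)
    have "(\<lambda>p. v (snd p) * (iexp (k (fst p) (snd p)) * u (fst p))) \<in> borel_measurable (lborel \<Otimes>\<^sub>M lborel)"
      by measurable
    then show "(\<lambda>(x, y). v y * (iexp (k x y) * u x)) \<in> borel_measurable (lborel \<Otimes>\<^sub>M lborel)"
      by (simp add: case_prod_beta')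
    have "(\<lambda>x. LINT y|lborel. norm (case (x, y) of (x, y) \<Rightarrow> v y * (iexp (k x y) * u x)))
        = (\<lambda>x. norm (u x) * (LINT y|lborel. norm (v y)))"
      by (auto simp: norm_mult mult.commute)
    then show "integrable lborel (\<lambda>x. LINT y|lborel. norm (case (x, y) of (x, y) \<Rightarrow> v y * (iexp (k x y) * u x)))"
      using u by auto
    show "AE x in lborel. integrable lborel (\<lambda>y. case (x, y) of (x, y) \<Rightarrow> v y * (iexp (k x y) * u x))"
    proof (intro AE_I2)
      fix x
      have [measurable]: "k x \<in> borel_measurable lborel" by (rule k(2))
      show "integrable lborel (\<lambda>y. case (x, y) of (x, y) \<Rightarrow> v y * (iexp (k x y) * u x))"
        by (rule Bochner_Integration.integrable_bound[where f = "\<lambda>y. norm (u x) * norm (v y)"])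
           (use v in \<open>auto simp: norm_mult\<close>)
    qed
  qed
qed

lemma schwartz_transposable_fourier: "schwartz_transposable fourier"
  unfolding schwartz_transposable_def
proof (intro ballI)
  fix f assume f: "f \<in> schwartz"
  have "(CLINT \<xi>|lborel. f \<xi> * fourier \<phi> \<xi>) = (CLINT x|lborel. fourier f x * \<phi> x)"
    if \<phi>: "\<phi> \<in> schwartz" for \<phi>
  proof -
    have "(CLINT \<xi>|lborel. f \<xi> * fourier \<phi> \<xi>) = (CLINT \<xi>|lborel. CLINT x|lborel. f \<xi> * (iexp (- (x * \<xi>)) * \<phi> x))"
      unfolding fourier_def by simp
    also have "\<dots> = (CLINT x|lborel. CLINT \<xi>|lborel. f \<xi> * (iexp (- (x * \<xi>)) * \<phi> x))"
      by (rule integral_iexp_kernel_swap[OF schwartz_integrable[OF \<phi>] schwartz_integrable[OF f]]) auto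
    also have "\<dots> = (CLINT x|lborel. fourier f x * \<phi> x)"
      unfolding fourier_def by (simp add: mult.commute mult.left_commute)
    finally show ?thesis .
  qed
  then show "\<exists>g\<in>schwartz. \<forall>\<phi>\<in>schwartz. (CLINT x|lborel. f x * fourier \<phi> x) = (CLINT x|lborel. g x * \<phi> x)"
    using schwartz_mapD[OF schwartz_map_fourier f] by blast
qed

lemma fourier_dilate_uminus: "fourier (dilate (- 1) \<phi>) \<xi> = fourier \<phi> (- \<xi>)"
  using lborel_integral_real_affine[of "- 1" "\<lambda>x. iexp (- (x * - \<xi>)) * \<phi> x" 0]
  unfolding fourier_def dilate_def by simp

section \<open>Fourier inversion\<close>

lemma integrable_gaussian: "integrable lborel (\<lambda>z. exp (- ((z::real)\<^sup>2) / 2))"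
proof -
  have "integrable lborel (\<lambda>z. sqrt (2 * pi) * std_normal_density z)" by simp
  moreover have "(\<lambda>z. sqrt (2 * pi) * std_normal_density z) = (\<lambda>z. exp (- ((z::real)\<^sup>2) / 2))"
    by (auto simp: std_normal_density_def)
  ultimately show ?thesis by simp
qed

lemma integral_gaussian_iexp:
  "(CLINT z|lborel. complex_of_real (exp (- (z\<^sup>2) / 2)) * iexp (t * z))
    = complex_of_real (sqrt (2 * pi) * exp (- (t\<^sup>2) / 2))"
proof -
  have "(CLINT x|lborel. std_normal_density x *\<^sub>R iexp (t * x)) = char std_normal_distribution t"
    unfolding char_def by (rule integral_density[symmetric]) (auto simp: normal_density_nonneg)
  also have "\<dots> = complex_of_real (exp (- (t\<^sup>2) / 2))"
    by (simp add: char_std_normal_distribution)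
  finally have char: "(CLINT x|lborel. std_normal_density x *\<^sub>R iexp (t * x)) = complex_of_real (exp (- (t\<^sup>2) / 2))" .
  have eq: "(\<lambda>z. complex_of_real (exp (- (z\<^sup>2) / 2)) * iexp (t * z))
      = (\<lambda>z. complex_of_real (sqrt (2 * pi)) * (std_normal_density z *\<^sub>R iexp (t * z)))"
    by (auto simp: std_normal_density_def scaleR_conv_of_real)
  show ?thesis unfolding eq integral_mult_right_zero char by simp
qed

lemma fourier_gaussian:
  assumes "0 < \<epsilon>"
  shows "(CLINT \<xi>|lborel. iexp (- (\<xi> * t)) * complex_of_real (exp (- ((\<epsilon> * \<xi>)\<^sup>2) / 2)))
    = complex_of_real (sqrt (2 * pi) / \<epsilon> * exp (- ((t / \<epsilon>)\<^sup>2) / 2))"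
proof -
  have "(CLINT \<xi>|lborel. iexp (- (\<xi> * t)) * complex_of_real (exp (- ((\<epsilon> * \<xi>)\<^sup>2) / 2)))
      = \<bar>1 / \<epsilon>\<bar> *\<^sub>R (CLINT z|lborel. iexp (- ((0 + 1 / \<epsilon> * z) * t))
          * complex_of_real (exp (- ((\<epsilon> * (0 + 1 / \<epsilon> * z))\<^sup>2) / 2)))"
    by (rule lborel_integral_real_affine) (use assms in simp)
  also have "(\<lambda>z. iexp (- ((0 + 1 / \<epsilon> * z) * t)) * complex_of_real (exp (- ((\<epsilon> * (0 + 1 / \<epsilon> * z))\<^sup>2) / 2)))
      = (\<lambda>z. complex_of_real (exp (- (z\<^sup>2) / 2)) * iexp ((- t / \<epsilon>) * z))"
    using assms by (auto simp: field_simps)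
  also have "(CLINT z|lborel. complex_of_real (exp (- (z\<^sup>2) / 2)) * iexp ((- t / \<epsilon>) * z))
      = complex_of_real (sqrt (2 * pi) * exp (- ((- t / \<epsilon>)\<^sup>2) / 2))"
    by (rule integral_gaussian_iexp)
  finally show ?thesis
    using assms by (simp add: scaleR_conv_of_real power_divide)
qed

text \<open>Fourier inversion through the regularising factor \<open>exp (-(\<epsilon> \<xi>)\<^sup>2/2)\<close>: by Fubini and the Fourier
  transform of the Gaussian, the regularised double integral is an average of \<open>\<phi>\<close> against a Gaussian
  of width \<open>\<epsilon>\<close>; then let \<open>\<epsilon> \<rightarrow> 0\<close> on both sides.\<close>

lemma fourier_fourier_regularised:
  assumes \<phi>: "\<phi> \<in> schwartz" and "0 < \<epsilon>"
  shows "(CLINT \<xi>|lborel. iexp (- (\<xi> * x0)) * fourier \<phi> \<xi> * complex_of_real (exp (- ((\<epsilon> * \<xi>)\<^sup>2) / 2)))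
    = (CLINT z|lborel. \<phi> (- x0 + \<epsilon> * z) * complex_of_real (sqrt (2 * pi) * exp (- (z\<^sup>2) / 2)))"
proof -
  define G where "G \<xi> = complex_of_real (exp (- ((\<epsilon> * \<xi>)\<^sup>2) / 2))" for \<xi>
  have "integrable lborel G"
    unfolding G_def using lborel_integrable_real_affine[OF integrable_gaussian, of \<epsilon> 0] \<open>0 < \<epsilon>\<close> by simp
  have "(CLINT \<xi>|lborel. iexp (- (\<xi> * x0)) * fourier \<phi> \<xi> * G \<xi>)
      = (CLINT \<xi>|lborel. CLINT y|lborel. G \<xi> * (iexp (- (y * \<xi>) - \<xi> * x0) * \<phi> y))"
  proof (rule Bochner_Integration.integral_cong[OF refl])
    fix \<xi>
    have "iexp (- (\<xi> * x0)) * fourier \<phi> \<xi> * G \<xi> = (G \<xi> * iexp (- (\<xi> * x0))) * fourier \<phi> \<xi>"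
      by (simp add: mult_ac)
    also have "\<dots> = (CLINT y|lborel. (G \<xi> * iexp (- (\<xi> * x0))) * (iexp (- (y * \<xi>)) * \<phi> y))"
      unfolding fourier_def by (rule integral_mult_right_zero[symmetric])
    also have "\<dots> = (CLINT y|lborel. G \<xi> * (iexp (- (y * \<xi>) - \<xi> * x0) * \<phi> y))"
      by (rule Bochner_Integration.integral_cong[OF refl])
         (simp add: iexp_add[symmetric, simplified] mult_ac exp_add[symmetric] algebra_simps)
    finally show "iexp (- (\<xi> * x0)) * fourier \<phi> \<xi> * G \<xi>
        = (CLINT y|lborel. G \<xi> * (iexp (- (y * \<xi>) - \<xi> * x0) * \<phi> y))" .
  qed
  also have "\<dots> = (CLINT y|lborel. CLINT \<xi>|lborel. G \<xi> * (iexp (- (y * \<xi>) - \<xi> * x0) * \<phi> y))"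
    by (rule integral_iexp_kernel_swap[OF schwartz_integrable[OF \<phi>] \<open>integrable lborel G\<close>]) auto
  also have "\<dots> = (CLINT y|lborel. \<phi> y * complex_of_real (sqrt (2 * pi) / \<epsilon> * exp (- (((x0 + y) / \<epsilon>)\<^sup>2) / 2)))"
  proof (rule Bochner_Integration.integral_cong[OF refl])
    fix y
    have "- (y * \<xi>) - \<xi> * x0 = - (\<xi> * (x0 + y))" for \<xi>
      by (simp add: algebra_simps)
    then have "(CLINT \<xi>|lborel. G \<xi> * (iexp (- (y * \<xi>) - \<xi> * x0) * \<phi> y))
        = (CLINT \<xi>|lborel. \<phi> y * (iexp (- (\<xi> * (x0 + y))) * complex_of_real (exp (- ((\<epsilon> * \<xi>)\<^sup>2) / 2))))"
      unfolding G_def by (simp only: mult_ac)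
    also have "\<dots> = \<phi> y * (CLINT \<xi>|lborel. iexp (- (\<xi> * (x0 + y))) * complex_of_real (exp (- ((\<epsilon> * \<xi>)\<^sup>2) / 2)))"
      by (rule integral_mult_right_zero)
    finally show "(CLINT \<xi>|lborel. G \<xi> * (iexp (- (y * \<xi>) - \<xi> * x0) * \<phi> y))
        = \<phi> y * complex_of_real (sqrt (2 * pi) / \<epsilon> * exp (- (((x0 + y) / \<epsilon>)\<^sup>2) / 2))"
      by (simp only: fourier_gaussian[OF \<open>0 < \<epsilon>\<close>])
  qed
  also have "\<dots> = \<bar>\<epsilon>\<bar> *\<^sub>R (CLINT z|lborel. \<phi> (- x0 + \<epsilon> * z)
      * complex_of_real (sqrt (2 * pi) / \<epsilon> * exp (- (((x0 + (- x0 + \<epsilon> * z)) / \<epsilon>)\<^sup>2) / 2)))"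
    by (rule lborel_integral_real_affine) (use \<open>0 < \<epsilon>\<close> in simp)
  also have "\<dots> = (CLINT z|lborel. \<phi> (- x0 + \<epsilon> * z) * complex_of_real (sqrt (2 * pi) * exp (- (z\<^sup>2) / 2)))"
    using \<open>0 < \<epsilon>\<close> by (simp add: scaleR_conv_of_real field_simps)
  finally show ?thesis unfolding G_def .
qed

lemma tendsto_fourier_regularised:
  assumes "\<phi> \<in> schwartz" "e \<longlonglongrightarrow> 0"
  shows "(\<lambda>n. CLINT \<xi>|lborel. iexp (- (\<xi> * x0)) * fourier \<phi> \<xi> * complex_of_real (exp (- ((e n * \<xi>)\<^sup>2) / 2)))
    \<longlonglongrightarrow> fourier (fourier \<phi>) x0"
  unfolding fourier_def[of "fourier \<phi>"]
proof (rule integral_dominated_convergence[where w = "\<lambda>\<xi>. norm (fourier \<phi> \<xi>)"])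
  have F: "fourier \<phi> \<in> schwartz" using schwartz_mapD[OF schwartz_map_fourier assms(1)] .
  note [measurable] = schwartz_borel_measurable[OF F]
  show "(\<lambda>\<xi>. iexp (- (\<xi> * x0)) * fourier \<phi> \<xi>) \<in> borel_measurable lborel"
    "\<And>n. (\<lambda>\<xi>. iexp (- (\<xi> * x0)) * fourier \<phi> \<xi> * complex_of_real (exp (- ((e n * \<xi>)\<^sup>2) / 2)))
      \<in> borel_measurable lborel"
    by measurable
  show "integrable lborel (\<lambda>\<xi>. norm (fourier \<phi> \<xi>))" using schwartz_integrable[OF F] by auto
  show "AE \<xi> in lborel. (\<lambda>n. iexp (- (\<xi> * x0)) * fourier \<phi> \<xi> * complex_of_real (exp (- ((e n * \<xi>)\<^sup>2) / 2)))
      \<longlonglongrightarrow> iexp (- (\<xi> * x0)) * fourier \<phi> \<xi>"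
  proof (intro AE_I2)
    fix \<xi>
    have "(\<lambda>n. iexp (- (\<xi> * x0)) * fourier \<phi> \<xi> * complex_of_real (exp (- ((e n * \<xi>)\<^sup>2) / 2)))
        \<longlonglongrightarrow> iexp (- (\<xi> * x0)) * fourier \<phi> \<xi> * complex_of_real (exp (- ((0 * \<xi>)\<^sup>2) / 2))"
      by (intro tendsto_intros assms(2)) simp_all
    then show "(\<lambda>n. iexp (- (\<xi> * x0)) * fourier \<phi> \<xi> * complex_of_real (exp (- ((e n * \<xi>)\<^sup>2) / 2)))
        \<longlonglongrightarrow> iexp (- (\<xi> * x0)) * fourier \<phi> \<xi>" by simp
  qed
  show "AE \<xi> in lborel. norm (iexp (- (\<xi> * x0)) * fourier \<phi> \<xi> * complex_of_real (exp (- ((e n * \<xi>)\<^sup>2) / 2)))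
      \<le> norm (fourier \<phi> \<xi>)" for n
    by (intro AE_I2) (simp add: norm_mult mult_left_le)
qed

lemma tendsto_gaussian_average:
  assumes "\<phi> \<in> schwartz" "e \<longlonglongrightarrow> 0"
  shows "(\<lambda>n. CLINT z|lborel. \<phi> (- x0 + e n * z) * complex_of_real (sqrt (2 * pi) * exp (- (z\<^sup>2) / 2)))
    \<longlonglongrightarrow> complex_of_real (2 * pi) * \<phi> (- x0)"
proof -
  define g where "g z = sqrt (2 * pi) * exp (- (z\<^sup>2) / 2)" for z :: real
  have lim: "(\<lambda>n. CLINT z|lborel. \<phi> (- x0 + e n * z) * complex_of_real (g z))
      \<longlonglongrightarrow> (CLINT z|lborel. \<phi> (- x0) * complex_of_real (g z))"
  proof (rule integral_dominated_convergence[where w = "\<lambda>z. snorm 0 0 \<phi> * g z"])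
    note [measurable] = schwartz_borel_measurable[OF assms(1)]
    show "(\<lambda>z. \<phi> (- x0) * complex_of_real (g z)) \<in> borel_measurable lborel"
      "\<And>n. (\<lambda>z. \<phi> (- x0 + e n * z) * complex_of_real (g z)) \<in> borel_measurable lborel"
      unfolding g_def by measurable
    show "integrable lborel (\<lambda>z. snorm 0 0 \<phi> * g z)"
      unfolding g_def using integrable_gaussian by auto
    show "AE z in lborel. (\<lambda>n. \<phi> (- x0 + e n * z) * complex_of_real (g z)) \<longlonglongrightarrow> \<phi> (- x0) * complex_of_real (g z)"
    proof (intro AE_I2)
      fix z
      have "(\<lambda>n. - x0 + e n * z) \<longlonglongrightarrow> - x0 + 0 * z" by (intro tendsto_intros assms(2))
      then have "(\<lambda>n. \<phi> (- x0 + e n * z)) \<longlonglongrightarrow> \<phi> (- x0)"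
        using isCont_tendsto_compose[OF schwartz_continuous[OF assms(1), of "- x0" 0]] by simp
      then show "(\<lambda>n. \<phi> (- x0 + e n * z) * complex_of_real (g z)) \<longlonglongrightarrow> \<phi> (- x0) * complex_of_real (g z)"
        by (intro tendsto_intros)
    qed
    show "AE z in lborel. norm (\<phi> (- x0 + e n * z) * complex_of_real (g z)) \<le> snorm 0 0 \<phi> * g z" for n
      using snorm_upper[OF assms(1), of "- x0 + e n * z" 0 0 for z]
      by (intro AE_I2) (simp add: norm_mult g_def mult_right_mono)
  qed
  have val: "(CLINT z|lborel. \<phi> (- x0) * complex_of_real (g z)) = complex_of_real (2 * pi) * \<phi> (- x0)"
    using integral_gaussian_iexp[of 0]
    by (simp add: g_def mult_ac of_real_mult[symmetric] del: of_real_mult)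
  from lim[unfolded val] show ?thesis unfolding g_def .
qed

lemma fourier_fourier:
  assumes "\<phi> \<in> schwartz"
  shows "fourier (fourier \<phi>) x = complex_of_real (2 * pi) * \<phi> (- x)"
proof -
  define e where "e n = inverse (real (Suc n))" for n
  have "e \<longlonglongrightarrow> 0" unfolding e_def by (rule LIMSEQ_inverse_real_of_nat)
  have "(\<lambda>n. CLINT \<xi>|lborel. iexp (- (\<xi> * x)) * fourier \<phi> \<xi> * complex_of_real (exp (- ((e n * \<xi>)\<^sup>2) / 2)))
      = (\<lambda>n. CLINT z|lborel. \<phi> (- x + e n * z) * complex_of_real (sqrt (2 * pi) * exp (- (z\<^sup>2) / 2)))"
    using fourier_fourier_regularised[OF assms] unfolding e_def by simp
  with tendsto_fourier_regularised[OF assms \<open>e \<longlonglongrightarrow> 0\<close>, of x]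
  have "(\<lambda>n. CLINT z|lborel. \<phi> (- x + e n * z) * complex_of_real (sqrt (2 * pi) * exp (- (z\<^sup>2) / 2)))
      \<longlonglongrightarrow> fourier (fourier \<phi>) x"
    by simp
  from LIMSEQ_unique[OF this tendsto_gaussian_average[OF assms \<open>e \<longlonglongrightarrow> 0\<close>]] show ?thesis .
qed

lemma schwartz_transposable_comp:
  assumes "schwartz_transposable A" "schwartz_transposable B" "schwartz_map B"
  shows "schwartz_transposable (\<lambda>\<phi>. A (B \<phi>))"
  unfolding schwartz_transposable_def
proof (intro ballI)
  fix f assume "f \<in> schwartz"
  then obtain g where "g \<in> schwartz"
    and g: "\<forall>\<phi>\<in>schwartz. (CLINT x|lborel. f x * A \<phi> x) = (CLINT x|lborel. g x * \<phi> x)"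
    using assms(1) unfolding schwartz_transposable_def by blast
  then obtain h where "h \<in> schwartz"
    and h: "\<forall>\<phi>\<in>schwartz. (CLINT x|lborel. g x * B \<phi> x) = (CLINT x|lborel. h x * \<phi> x)"
    using assms(2) unfolding schwartz_transposable_def by blast
  show "\<exists>h\<in>schwartz. \<forall>\<phi>\<in>schwartz. (CLINT x|lborel. f x * A (B \<phi>) x) = (CLINT x|lborel. h x * \<phi> x)"
    using \<open>h \<in> schwartz\<close> g h schwartz_mapD[OF assms(3)] by auto
qed

lemma schwartz_transposable_scale:
  assumes "schwartz_transposable A"
  shows "schwartz_transposable (\<lambda>\<phi> x. c * A \<phi> x)"
  unfolding schwartz_transposable_def
proof (intro ballI)
  fix f assume "f \<in> schwartz"
  then obtain g where "g \<in> schwartz"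
    and g: "\<forall>\<phi>\<in>schwartz. (CLINT x|lborel. c * f x * A \<phi> x) = (CLINT x|lborel. g x * \<phi> x)"
    using assms schwartz_cmult[of f c] unfolding schwartz_transposable_def by fastforce
  then show "\<exists>g\<in>schwartz. \<forall>\<phi>\<in>schwartz. (CLINT x|lborel. f x * (c * A \<phi> x)) = (CLINT x|lborel. g x * \<phi> x)"
    by (auto simp: mult_ac)
qed

definition fourier_inverse :: "(real \<Rightarrow> complex) \<Rightarrow> real \<Rightarrow> complex" where
  "fourier_inverse \<phi> = (\<lambda>x. complex_of_real (inverse (2 * pi)) * dilate (- 1) (fourier \<phi>) x)"

lemma fourier_fourier_inverse: "\<phi> \<in> schwartz \<Longrightarrow> fourier (fourier_inverse \<phi>) = \<phi>"
proof -
  assume "\<phi> \<in> schwartz"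
  have "dilate (- 1) (fourier \<phi>) \<in> schwartz"
    using \<open>\<phi> \<in> schwartz\<close> by (intro schwartz_mapD[OF schwartz_map_dilate] schwartz_mapD[OF schwartz_map_fourier]) auto
  then have "fourier (fourier_inverse \<phi>) = (\<lambda>\<xi>. complex_of_real (inverse (2 * pi)) * fourier (dilate (- 1) (fourier \<phi>)) \<xi>)"
    unfolding fourier_inverse_def by (rule schwartz_linear_cmult[OF schwartz_linear_fourier])
  then show ?thesis
    using \<open>\<phi> \<in> schwartz\<close> by (simp add: fourier_dilate_uminus fourier_fourier mult.assoc[symmetric])
qed

lemma fourier_inverse_fourier: "\<phi> \<in> schwartz \<Longrightarrow> fourier_inverse (fourier \<phi>) = \<phi>"
  by (simp add: fourier_inverse_def dilate_def fourier_fourier fun_eq_iff field_simps)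

lemma schwartz_iso_fourier: "schwartz_iso fourier fourier_inverse"
proof -
  have "schwartz_map fourier_inverse"
    unfolding fourier_inverse_def[abs_def]
    by (rule schwartz_map_scale[OF schwartz_map_comp[OF schwartz_map_dilate schwartz_map_fourier]]) simp
  moreover have "schwartz_linear fourier_inverse"
    using schwartz_linear_fourier
    unfolding schwartz_linear_def linear_functional_def fourier_inverse_def dilate_def
    by (simp add: algebra_simps)
  moreover have "schwartz_transposable fourier_inverse"
    unfolding fourier_inverse_def[abs_def]
    by (rule schwartz_transposable_scale[OF schwartz_transposable_comp[OF schwartz_transposable_dilate
          schwartz_transposable_fourier schwartz_map_fourier]]) simp
  ultimately show ?thesis
    unfolding schwartz_iso_def
    by (simp add: schwartz_map_fourier schwartz_linear_fourier schwartz_transposable_fourier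
        fourier_fourier_inverse fourier_inverse_fourier)
qed

lemma dn1_fourier: "\<phi> \<in> schwartz \<Longrightarrow> dn 1 (fourier \<phi>) = fourier (\<lambda>x. - \<i> * (complex_of_real x * \<phi> x))"
  by (intro dn1_eqI has_vector_derivative_fourier)

lemma sympl_invariant_rot: "sympl_invariant 0 (- 1) 1 0"
proof (rule sympl_invariantI[OF schwartz_iso_fourier dn1_fourier schwartz_map_scale[OF schwartz_map_xmult]
      xmult_fourier schwartz_map_scale[OF schwartz_map_dn1]])
  fix p :: "nat \<Rightarrow> nat \<Rightarrow> complex" and \<phi> assume "\<phi> \<in> schwartz"
  then show "(\<lambda>x. \<Sum>k\<le>2. \<Sum>j\<le>2 - k. p k j * \<i> ^ k *
      ((\<lambda>\<phi> x. - \<i> * (complex_of_real x * \<phi> x)) ^^ k) (((\<lambda>\<phi> x. - \<i> * dn 1 \<phi> x) ^^ j) \<phi>) x)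
      = test_op (comp_coeffs p 0 (- 1) 1 0) \<phi>"
    unfolding sum_order2 test_op_explicit[OF \<open>\<phi> \<in> schwartz\<close>] comp_coeffs_def Let_def
    by (simp add: funpow_one funpow_two dn1_simps del: One_nat_def)
       (simp add: fun_eq_iff field_simps power2_eq_square)
qed

theorem proposition4p6:
  fixes \<alpha> \<beta> \<gamma> \<delta> :: real
    and a bc :: "nat \<Rightarrow> nat \<Rightarrow> complex"
  assumes "\<alpha> * \<delta> - \<beta> * \<gamma> = 1"
    and "\<beta> * \<delta> \<noteq> 0"
    and "norm (a 2 0) + norm (a 1 1) + norm (a 0 2) \<noteq> 0"
    and "bc 2 0 \<noteq> 0"
    and "sympl_equiv (weyl_symbol a) (weyl_symbol bc)"
  shows "(kernel_trivial (op_of a) \<longleftrightarrow> kernel_trivial (op_of bc))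
       \<and> (globally_regular (op_of a) \<longleftrightarrow> globally_regular (op_of bc))
       \<and> (globally_regular (op_transpose a) \<longleftrightarrow> globally_regular (op_transpose bc))"
proof -
  obtain m11 m12 m21 m22 :: real where det: "m11 * m22 - m12 * m21 = 1"
    and equiv: "\<And>x \<xi>. weyl_symbol bc x \<xi> = weyl_symbol a (m11 * x + m12 * \<xi>) (m21 * x + m22 * \<xi>)"
    using assms(5) unfolding sympl_equiv_def by blast
  have invariant: "\<And>n11 n12 n21 n22. n11 * n22 - n12 * n21 = 1 \<Longrightarrow> sympl_invariant n11 n12 n21 n22"
    using sympl_invariant_mult sympl_invariant_diag sympl_invariant_shear sympl_invariant_rot
    by (rule SL2_induct)
  have "equally_regular (test_op a) (test_op bc)"
    using invariant[OF det] equiv unfolding sympl_invariant_def by blast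
  moreover have "equally_regular (test_op (transpose_coeffs a)) (test_op (transpose_coeffs bc))"
    using invariant[of m11 m22 "- m12" "- m21"] det equiv
    unfolding sympl_invariant_def by (simp add: weyl_symbol_transpose_coeffs)
  moreover have "(kernel_trivial (op_of c) \<longleftrightarrow> kernel_trivial (dual_op (test_op c)))
      \<and> (globally_regular (op_of c) \<longleftrightarrow> globally_regular (dual_op (test_op c)))" for c
    by (rule kernel_trivial_globally_regular_cong) (simp add: op_of_eq_test_op dual_op_def)
  moreover have "(kernel_trivial (op_transpose c) \<longleftrightarrow> kernel_trivial (dual_op (test_op (transpose_coeffs c))))
      \<and> (globally_regular (op_transpose c) \<longleftrightarrow> globally_regular (dual_op (test_op (transpose_coeffs c))))" for c
    by (rule kernel_trivial_globally_regular_cong) (simp add: op_transpose_eq_test_op dual_op_def)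
  ultimately show ?thesis
    unfolding equally_regular_def by blast
qed

end
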